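(* Let $\kappa\in(0,\infty)$, $d\in\mathbb{N}$, and let $\mathfrak{l}\colon\mathbb{R}^d\times\mathbb{R}^d\to\mathbb{R}$ satisfy $\mathfrak{l}(\theta,x)=\frac{\kappa}{2}\|\theta-x\|^2$ for all $\theta,x\in\mathbb{R}^d$. Let $(\Omega,\mathcal{F},(\mathbb{F}_n)_{n\in\mathbb{N}_0},\mathbb{P})$ be a filtered probability space. For every $n\in\mathbb{N}$ let $\gamma_n\colon\Omega\to\mathbb{R}$ be $\mathbb{F}_{n-1}$-measurable, assume $\mathbb{P}(\limsup_{n\to\infty}\gamma_n=0)=\mathbb{P}(\sum_{n=1}^\infty|\gamma_n|=\infty)=1$, and assume $\mathbb{P}(\gamma_{n+1}\le\gamma_n\le\kappa^{-1})=1$ for all $n\in\mathbb{N}$. Let $M\in\mathbb{N}$, let $X_{n,m}\colon\Omega\to\mathbb{R}^d$, $(n,m)\in\mathbb{N}\times\{1,\dots,M\}$, be i.i.d. random variables, and let $\Theta\colon\mathbb{N}_0\times\Omega\to\mathbb{R}^d$ be an $(\mathbb{F}_n)_{n\in\mathbb{N}_0}$-adapted process such that for all $n\in\mathbb{N}$ $$\Theta_n=\Theta_{n-1}-\frac{\gamma_n}{M}\Big[\sum_{m=1}^M(\nabla_\theta\mathfrak{l})(\Theta_{n-1},X_{n,m})\Big].$$ Assume that $X_{n,m}$ is $\mathbb{F}_n$-measurable for all $n\in\mathbb{N}$, $m\in\{1,\dots,M\}$, that $\sigma((X_{n,m})_{m\in\{1,\dots,M\}})$ and $\mathbb{F}_{n-1}$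 are independent for all $n\in\mathbb{N}$, and that $\mathbb{E}\big[\|\Theta_0\|^2+\sup_{n\in\mathbb{N}}\|X_{n,1}\|\big]<\infty$. For every $t\in[0,\infty)$ let $N_t=\inf\{n\in\mathbb{N}_0\colon\sum_{k=1}^n\gamma_k\ge t\}$. Then $$\limsup_{t\to\infty}\mathbb{E}\big[\|\Theta_{N_t}-\mathbb{E}[X_{1,1}]\|^2\big]=0.$$
   Context: $\|\cdot\|$ is the Euclidean norm; $\nabla_\theta\mathfrak{l}$ is the gradient in the first argument. *)

theory Defs
  imports "HOL-Probability.Probability"
begin

definition grad1 :: "('v::real_inner \<Rightarrow> 'x \<Rightarrow> real) \<Rightarrow> 'v \<Rightarrow> 'x \<Rightarrow> 'v" where
  "grad1 l \<theta> x = (THE D. GDERIV (\<lambda>y. l y x) \<theta> :> D)"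

end

theory Submission
  imports Defs
begin

text \<open>
  With \<open>e\<^sub>n = \<Theta>\<^sub>n - E X\<close>, the SGD step for the quadratic loss is the convex combination
  \<open>e\<^sub>n = (1 - \<kappa>\<gamma>\<^sub>n) e\<^sub>n\<^sub>-\<^sub>1 + \<kappa>\<gamma>\<^sub>n \<xi>\<^sub>n\<close>, where the noise \<open>\<xi>\<^sub>n\<close> (the centred minibatch mean)
  is independent of the past and bounded by some \<open>D\<close>, because an i.i.d. sequence with
  integrable supremum is almost surely bounded. For the weight
  \<open>A\<^sub>n = exp (\<kappa> (\<gamma>\<^sub>1 + \<dots> + \<gamma>\<^sub>n))\<close> one has \<open>exp a (1 - a)\<^sup>2 \<le> 1\<close> and the cross term has mean
  zero, so \<open>A\<^sub>n \<parallel>e\<^sub>n\<parallel>\<^sup>2\<close> grows in expectation by at most \<open>\<kappa>\<^sup>2 D\<^sup>2 \<gamma>\<^sub>n\<^sup>2 A\<^sub>n\<close> per step.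
  Stopping at \<open>N\<^sub>t\<close>, where \<open>A \<ge> exp (\<kappa> t)\<close>, gives
  \<open>E \<parallel>e\<^bsub>N\<^sub>t\<^esub>\<parallel>\<^sup>2 \<le> exp (-\<kappa> t) (E \<parallel>e\<^sub>0\<parallel>\<^sup>2 + \<kappa>\<^sup>2 D\<^sup>2 E \<Sum>\<^sub>k\<^sub>\<le>\<^sub>N\<^sub>t \<gamma>\<^sub>k\<^sup>2 A\<^sub>k)\<close>,
  and the last term vanishes as \<open>t \<rightarrow> \<infinity>\<close> by dominated convergence because \<open>\<gamma>\<^sub>k \<rightarrow> 0\<close>.
\<close>

section \<open>Deterministic estimates\<close>

lemma grad1_scaled_sq_dist:
  fixes \<kappa> :: real and l :: "'a::real_inner \<Rightarrow> 'a \<Rightarrow> real"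
  assumes l: "\<And>\<theta> x. l \<theta> x = \<kappa> / 2 * (norm (\<theta> - x))\<^sup>2"
  shows "grad1 l \<theta> x = \<kappa> *\<^sub>R (\<theta> - x)"
proof -
  have deriv: "GDERIV (\<lambda>y. l y x) \<theta> :> \<kappa> *\<^sub>R (\<theta> - x)"
    unfolding l gderiv_def power2_norm_eq_inner
    by (rule derivative_eq_intros refl | simp add: inner_commute algebra_simps)+
  have "D = \<kappa> *\<^sub>R (\<theta> - x)" if "GDERIV (\<lambda>y. l y x) \<theta> :> D" for D
  proof -
    have "(\<lambda>h. h \<bullet> D) = (\<lambda>h. h \<bullet> (\<kappa> *\<^sub>R (\<theta> - x)))"
      using has_derivative_unique that deriv unfolding gderiv_def by blast
    then have "(D - \<kappa> *\<^sub>R (\<theta> - x)) \<bullet> (D - \<kappa> *\<^sub>R (\<theta> - x)) = 0"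
      by (metis inner_diff_right right_minus_eq)
    then show ?thesis by simp
  qed
  with deriv show ?thesis
    unfolding grad1_def by (rule the_equality)
qed

lemma minibatch_step_scaled_sq_dist:
  fixes \<theta> \<mu> :: "'a::real_vector" and Y :: "nat \<Rightarrow> 'a"
  assumes "b \<noteq> 0"
  shows "\<theta> - (g / real b) *\<^sub>R (\<Sum>m=1..b. \<kappa> *\<^sub>R (\<theta> - Y m)) - \<mu>
    = (1 - \<kappa> * g) *\<^sub>R (\<theta> - \<mu>) + (\<kappa> * g) *\<^sub>R ((1 / real b) *\<^sub>R (\<Sum>m=1..b. Y m) - \<mu>)"
proof -
  have "(\<Sum>m=1..b. \<kappa> *\<^sub>R (\<theta> - Y m)) = (\<kappa> * real b) *\<^sub>R \<theta> - \<kappa> *\<^sub>R (\<Sum>m=1..b. Y m)"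
    by (simp add: scaleR_diff_right sum_subtractf scaleR_sum_right[symmetric] sum_constant_scaleR
        del: sum_constant)
  then have "(g / real b) *\<^sub>R (\<Sum>m=1..b. \<kappa> *\<^sub>R (\<theta> - Y m))
      = (g * \<kappa>) *\<^sub>R \<theta> - (g * \<kappa> / real b) *\<^sub>R (\<Sum>m=1..b. Y m)"
    using assms by (simp add: scaleR_diff_right)
  then show ?thesis
    by (simp add: algebra_simps)
qed

lemma norm_scaleR_add_scaleR_sq:
  fixes x y :: "'a::real_inner"
  shows "(norm (p *\<^sub>R x + q *\<^sub>R y))\<^sup>2 = p\<^sup>2 * (norm x)\<^sup>2 + 2 * p * q * (x \<bullet> y) + q\<^sup>2 * (norm y)\<^sup>2"
  unfolding power2_norm_eq_inner
  by (simp add: inner_add_left inner_add_right inner_commute algebra_simps power2_eq_square)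

lemma exp_mult_one_minus_sq_le_one:
  fixes a :: real
  assumes "0 \<le> a" "a \<le> 1"
  shows "exp a * (1 - a)\<^sup>2 \<le> 1"
proof -
  have "(1 - a)\<^sup>2 \<le> 1 - a"
    using assms by (simp add: power2_eq_square mult_left_le_one_le)
  also have "1 - a \<le> exp (- a)"
    using exp_ge_add_one_self[of "- a"] by simp
  finally show ?thesis
    by (simp add: exp_minus field_simps)
qed

lemma decreasing_limsup_zero:
  fixes x :: "nat \<Rightarrow> real"
  assumes mono: "\<And>n. n \<ge> 1 \<Longrightarrow> x (Suc n) \<le> x n"
    and limsup: "limsup (\<lambda>n. ereal (x n)) = 0"
  shows "0 \<le> x (Suc n)" and "(\<lambda>n. x (Suc n)) \<longlonglongrightarrow> 0"
proof -
  define y where "y n = ereal (x (Suc n))" for n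
  have "decseq y"
    unfolding decseq_Suc_iff y_def using mono by auto
  then have lim: "y \<longlonglongrightarrow> (INF n. y n)"
    by (rule LIMSEQ_INF)
  then have "(\<lambda>n. ereal (x n)) \<longlonglongrightarrow> (INF n. y n)"
    unfolding y_def by (subst filterlim_sequentially_Suc[symmetric])
  with limsup have inf: "(INF n. y n) = 0"
    using lim_imp_Limsup by force
  then show "0 \<le> x (Suc n)"
    using INF_lower[of n UNIV y] unfolding y_def by simp
  from lim inf show "(\<lambda>n. x (Suc n)) \<longlonglongrightarrow> 0"
    unfolding y_def by (simp only: zero_ereal_def lim_ereal)
qed

lemma unbounded_partial_sums_if_suminf_infinite:
  fixes g :: "nat \<Rightarrow> real"
  assumes nonneg: "\<And>n. 0 \<le> g n" and inf: "(\<Sum>n. ennreal (g n)) = \<infinity>"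
  shows "\<exists>n. t \<le> (\<Sum>k<n. g k)"
proof (rule ccontr)
  assume "\<not> ?thesis"
  then have "(\<Sum>k<n. ennreal (g k)) \<le> ennreal t" for n
    using nonneg by (simp add: sum_ennreal not_le ennreal_leI less_imp_le)
  then have "(\<Sum>n. ennreal (g n)) \<le> ennreal t"
    by (intro suminf_le_const summableI)
  with inf show False
    by (simp add: top_unique)
qed

lemma sum_exp_partial_sums_le:
  fixes g :: "nat \<Rightarrow> real"
  assumes \<kappa>: "0 < \<kappa>" and g: "\<And>k. 0 \<le> g k" "\<And>k. \<kappa> * g k \<le> 1"
  shows "(\<Sum>k<n. \<kappa> * g k * exp (\<kappa> * (\<Sum>j<Suc k. g j))) \<le> exp 1 * exp (\<kappa> * (\<Sum>j<n. g j))"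
proof -
  define b where "b n = exp (\<kappa> * (\<Sum>j<n. g j))" for n
  have step: "\<kappa> * g k * b (Suc k) \<le> exp 1 * (b (Suc k) - b k)" for k
  proof -
    have b_Suc: "b (Suc k) = exp (\<kappa> * g k) * b k"
      unfolding b_def by (simp add: distrib_left exp_add)
    have "\<kappa> * g k \<le> exp (\<kappa> * g k) - 1"
      using exp_ge_add_one_self[of "\<kappa> * g k"] by linarith
    then have "\<kappa> * g k * exp (\<kappa> * g k) \<le> (exp (\<kappa> * g k) - 1) * exp 1"
      using \<kappa> g[of k] by (intro mult_mono) auto
    then have "\<kappa> * g k * exp (\<kappa> * g k) * b k \<le> (exp (\<kappa> * g k) - 1) * exp 1 * b k"
      by (intro mult_right_mono) (auto simp: b_def)
    then show ?thesis
      unfolding b_Suc by (simp add: algebra_simps)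
  qed
  have "(\<Sum>k<n. \<kappa> * g k * b (Suc k)) \<le> (\<Sum>k<n. exp 1 * (b (Suc k) - b k))"
    by (intro sum_mono step)
  also have "\<dots> = exp 1 * (b n - b 0)"
    by (simp add: sum_distrib_left[symmetric] sum_lessThan_telescope)
  also have "\<dots> \<le> exp 1 * b n"
    by (simp add: b_def)
  finally show ?thesis
    unfolding b_def .
qed

text \<open>Split at \<open>K\<close>: the head is a fixed finite sum, and in the tail \<open>g\<^sub>k\<^sup>2 \<le> \<delta> g\<^sub>k\<close>
  reduces to the telescoping bound above.\<close>

lemma sum_sq_exp_partial_sums_le:
  fixes g :: "nat \<Rightarrow> real"
  assumes \<kappa>: "0 < \<kappa>" and g: "\<And>k. 0 \<le> g k" "\<And>k. \<kappa> * g k \<le> 1"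
    and \<delta>: "0 \<le> \<delta>" "\<And>k. K \<le> k \<Longrightarrow> g k \<le> \<delta>"
  shows "(\<Sum>k<n. (g k)\<^sup>2 * exp (\<kappa> * (\<Sum>j<Suc k. g j)))
    \<le> (\<Sum>k<K. (g k)\<^sup>2 * exp (\<kappa> * (\<Sum>j<Suc k. g j))) + \<delta> * exp 1 / \<kappa> * exp (\<kappa> * (\<Sum>j<n. g j))"
proof -
  define f where "f k = (g k)\<^sup>2 * exp (\<kappa> * (\<Sum>j<Suc k. g j))" for k
  define h where "h k = \<kappa> * g k * exp (\<kappa> * (\<Sum>j<Suc k. g j))" for k
  have f_le: "f k \<le> (if k < K then f k else 0) + \<delta> / \<kappa> * h k" for k
  proof (cases "k < K")
    case False
    then have "(g k)\<^sup>2 \<le> \<delta> * g k"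
      using g(1)[of k] \<delta>(2)[of k] by (simp add: power2_eq_square mult_right_mono)
    with False \<kappa> show ?thesis
      unfolding f_def h_def by (simp add: mult_right_mono)
  qed (use \<kappa> \<delta> g in \<open>simp add: f_def h_def\<close>)
  have head: "(\<Sum>k<n. if k < K then f k else 0) \<le> (\<Sum>k<K. f k)"
  proof -
    have "(\<Sum>k<n. if k < K then f k else 0) = (\<Sum>k\<in>{..<n} \<inter> {..<K}. f k)"
      by (simp add: sum.inter_restrict lessThan_def)
    also have "\<dots> \<le> (\<Sum>k<K. f k)"
      by (intro sum_mono2) (auto simp: f_def)
    finally show ?thesis .
  qed
  have "(\<Sum>k<n. f k) \<le> (\<Sum>k<n. if k < K then f k else 0) + \<delta> / \<kappa> * (\<Sum>k<n. h k)"
    using sum_mono[of "{..<n}", OF f_le] by (simp add: sum.distrib sum_distrib_left)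
  also have "\<dots> \<le> (\<Sum>k<K. f k) + \<delta> / \<kappa> * (exp 1 * exp (\<kappa> * (\<Sum>j<n. g j)))"
    using head sum_exp_partial_sums_le[OF \<kappa> g, where n = n] \<kappa> \<delta>
    unfolding h_def by (intro add_mono mult_left_mono) auto
  finally show ?thesis
    unfolding f_def by simp
qed

lemma tendsto_exp_neg_mult_at_top:
  fixes \<kappa> c :: real
  assumes "0 < \<kappa>"
  shows "((\<lambda>t. c * exp (- \<kappa> * t)) \<longlongrightarrow> 0) at_top"
proof -
  have "filterlim (\<lambda>t. \<kappa> * t) at_top at_top"
    by (rule filterlim_tendsto_pos_mult_at_top[OF tendsto_const assms filterlim_ident])
  then have "filterlim (\<lambda>t. - \<kappa> * t) at_bot at_top"
    by (simp add: filterlim_uminus_at_bot)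
  from tendsto_mult_right_zero[OF filterlim_compose[OF exp_at_bot this]] show ?thesis .
qed

lemma exp_neg_sum_sq_exp_partial_sums_le:
  fixes g :: "nat \<Rightarrow> real"
  assumes \<kappa>: "0 < \<kappa>" and g: "\<And>k. 0 \<le> g k" "\<And>k. \<kappa> * g k \<le> 1"
    and \<delta>: "0 \<le> \<delta>" "\<And>k. K \<le> k \<Longrightarrow> g k \<le> \<delta>"
    and n: "\<kappa> * (\<Sum>j<n. g j) \<le> \<kappa> * t + 1"
  shows "exp (- \<kappa> * t) * (\<Sum>k<n. (g k)\<^sup>2 * exp (\<kappa> * (\<Sum>j<Suc k. g j)))
    \<le> (\<Sum>k<K. (g k)\<^sup>2 * exp (\<kappa> * (\<Sum>j<Suc k. g j))) * exp (- \<kappa> * t) + \<delta> * (exp 1)\<^sup>2 / \<kappa>"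
proof -
  define C where "C = (\<Sum>k<K. (g k)\<^sup>2 * exp (\<kappa> * (\<Sum>j<Suc k. g j)))"
  define c where "c = \<delta> * exp 1 / \<kappa>"
  have c: "0 \<le> c"
    unfolding c_def using \<delta> \<kappa> by simp
  have "(\<Sum>k<n. (g k)\<^sup>2 * exp (\<kappa> * (\<Sum>j<Suc k. g j))) \<le> C + c * exp (\<kappa> * (\<Sum>j<n. g j))"
    using sum_sq_exp_partial_sums_le[OF \<kappa> g \<delta>] unfolding C_def c_def .
  also have "\<dots> \<le> C + c * exp (\<kappa> * t + 1)"
    using n c by (simp add: mult_left_mono)
  finally have "exp (- \<kappa> * t) * (\<Sum>k<n. (g k)\<^sup>2 * exp (\<kappa> * (\<Sum>j<Suc k. g j)))
      \<le> exp (- \<kappa> * t) * (C + c * exp (\<kappa> * t + 1))"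
    by (rule mult_left_mono) simp
  also have "\<dots> = C * exp (- \<kappa> * t) + c * (exp (- \<kappa> * t) * exp (\<kappa> * t + 1))"
    by (simp only: distrib_left mult_ac)
  also have "exp (- \<kappa> * t) * exp (\<kappa> * t + 1) = exp 1"
    by (simp add: mult_exp_exp)
  finally show ?thesis
    unfolding C_def c_def by (simp add: power2_eq_square)
qed

lemma tendsto_exp_neg_sum_sq_exp_partial_sums:
  fixes g :: "nat \<Rightarrow> real" and N :: "real \<Rightarrow> nat"
  assumes \<kappa>: "0 < \<kappa>" and g: "\<And>k. 0 \<le> g k" "\<And>k. \<kappa> * g k \<le> 1"
    and lim: "g \<longlonglongrightarrow> 0"
    and N: "\<And>t. t \<ge> 0 \<Longrightarrow> \<kappa> * (\<Sum>j<N t. g j) \<le> \<kappa> * t + 1"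
  shows "((\<lambda>t. exp (- \<kappa> * t) * (\<Sum>k<N t. (g k)\<^sup>2 * exp (\<kappa> * (\<Sum>j<Suc k. g j)))) \<longlongrightarrow> 0) at_top"
proof (rule tendstoI)
  fix \<epsilon> :: real
  assume \<epsilon>: "0 < \<epsilon>"
  define \<delta> where "\<delta> = \<epsilon> * \<kappa> / (2 * (exp 1)\<^sup>2)"
  have \<delta>: "0 < \<delta>" and \<delta>_eq: "\<delta> * (exp 1)\<^sup>2 / \<kappa> = \<epsilon> / 2"
    unfolding \<delta>_def using \<epsilon> \<kappa> by auto
  obtain K where K: "\<And>k. K \<le> k \<Longrightarrow> g k \<le> \<delta>"
    using tendstoD[OF lim \<delta>] g(1) unfolding eventually_sequentially
    by (metis dist_real_def diff_zero abs_of_nonneg less_imp_le)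
  define C where "C = (\<Sum>k<K. (g k)\<^sup>2 * exp (\<kappa> * (\<Sum>j<Suc k. g j)))"
  have "\<forall>\<^sub>F t in at_top. C * exp (- \<kappa> * t) < \<epsilon> / 2"
    using tendstoD[OF tendsto_exp_neg_mult_at_top[OF \<kappa>, of C], of "\<epsilon> / 2"] \<epsilon>
    by (auto elim: eventually_mono simp: dist_real_def)
  moreover have "\<forall>\<^sub>F t in at_top. (0::real) \<le> t"
    by (rule eventually_ge_at_top)
  ultimately show "\<forall>\<^sub>F t in at_top.
      dist (exp (- \<kappa> * t) * (\<Sum>k<N t. (g k)\<^sup>2 * exp (\<kappa> * (\<Sum>j<Suc k. g j)))) 0 < \<epsilon>"
  proof eventually_elim
    case (elim t)
    have "0 \<le> exp (- \<kappa> * t) * (\<Sum>k<N t. (g k)\<^sup>2 * exp (\<kappa> * (\<Sum>j<Suc k. g j)))"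
      by (simp add: sum_nonneg)
    moreover have "exp (- \<kappa> * t) * (\<Sum>k<N t. (g k)\<^sup>2 * exp (\<kappa> * (\<Sum>j<Suc k. g j)))
        \<le> C * exp (- \<kappa> * t) + \<epsilon> / 2"
      using exp_neg_sum_sq_exp_partial_sums_le[where K = K and \<delta> = \<delta>, OF \<kappa> g _ K N[OF elim(2)]] \<delta>
      unfolding C_def \<delta>_eq by simp
    ultimately show ?case
      using elim(1) by (simp add: dist_real_def)
  qed
qed

lemma suminf_le_telescoping:
  fixes P E T :: "nat \<Rightarrow> ennreal"
  assumes step: "\<And>k. P (Suc k) + E k \<le> P k + c * T k"
  shows "(\<Sum>k. E k) \<le> P 0 + c * (\<Sum>k. T k)"
proof (intro suminf_le_const summableI)
  fix n
  have "P n + (\<Sum>k<n. E k) \<le> P 0 + c * (\<Sum>k<n. T k)"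
  proof (induction n)
    case (Suc n)
    have "P (Suc n) + (\<Sum>k<Suc n. E k) \<le> (P n + c * T n) + (\<Sum>k<n. E k)"
      using add_right_mono[OF step[of n], of "\<Sum>k<n. E k"] by (simp add: ac_simps)
    also have "\<dots> \<le> (P 0 + c * (\<Sum>k<n. T k)) + c * T n"
      using Suc.IH by (simp add: add_right_mono ac_simps)
    finally show ?case
      by (simp add: distrib_left ac_simps)
  qed simp
  then have "(\<Sum>k<n. E k) \<le> P 0 + c * (\<Sum>k<n. T k)"
    by (rule order_trans[rotated]) simp
  also have "\<dots> \<le> P 0 + c * (\<Sum>k. T k)"
    by (intro add_left_mono mult_left_mono sum_le_suminf) (auto intro: summableI)
  finally show "(\<Sum>k<n. E k) \<le> P 0 + c * (\<Sum>k. T k)" .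
qed

lemma step_size_path:
  fixes x :: "nat \<Rightarrow> real"
  assumes \<kappa>: "0 < \<kappa>"
    and mono: "\<And>n. n \<ge> 1 \<Longrightarrow> x (Suc n) \<le> x n \<and> x n \<le> 1 / \<kappa>"
    and limsup: "limsup (\<lambda>n. ereal (x n)) = 0"
    and diverge: "(\<Sum>n. ennreal \<bar>x (Suc n)\<bar>) = \<infinity>"
  shows "(\<forall>n. 0 \<le> x (Suc n) \<and> \<kappa> * x (Suc n) \<le> 1) \<and> (\<lambda>n. x (Suc n)) \<longlonglongrightarrow> 0
    \<and> (\<forall>t. \<exists>n. t \<le> (\<Sum>k<n. x (Suc k)))"
proof (intro conjI allI)
  note lim = decreasing_limsup_zero[of x, OF conjunct1[OF mono] limsup]
  show "0 \<le> x (Suc n)" "(\<lambda>n. x (Suc n)) \<longlonglongrightarrow> 0" for n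
    using lim by auto
  show "\<kappa> * x (Suc n) \<le> 1" for n
    using mono[of "Suc n"] \<kappa> by (simp add: field_simps)
  show "\<exists>n. t \<le> (\<Sum>k<n. x (Suc k))" for t
    using lim(1) diverge by (intro unbounded_partial_sums_if_suminf_infinite) auto
qed

lemma norm_batch_mean_diff_le:
  fixes Y :: "nat \<Rightarrow> 'a::real_normed_vector"
  assumes "b \<ge> 1" and Y: "\<And>m. m \<in> {1..b} \<Longrightarrow> norm (Y m) \<le> B"
  shows "norm ((1 / real b) *\<^sub>R (\<Sum>m=1..b. Y m) - \<mu>) \<le> B + norm \<mu>"
proof -
  have "norm (\<Sum>m=1..b. Y m) \<le> (\<Sum>m=1..b. norm (Y m))"
    by (rule norm_sum)
  also have "\<dots> \<le> (\<Sum>m=1..b. B)"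
    using Y by (rule sum_mono)
  finally have "norm (\<Sum>m=1..b. Y m) \<le> real b * B"
    by simp
  then have "norm ((1 / real b) *\<^sub>R (\<Sum>m=1..b. Y m)) \<le> B"
    using assms(1) by (simp add: field_simps)
  then show ?thesis
    using norm_triangle_ineq4[of "(1 / real b) *\<^sub>R (\<Sum>m=1..b. Y m)" \<mu>] by linarith
qed

section \<open>Independence and boundedness\<close>

lemma (in prob_space) nn_integral_SUP_norm_ge_if_indep:
  fixes Z :: "'i \<Rightarrow> 'a \<Rightarrow> 'b::real_normed_vector"
  assumes indep: "indep_vars (\<lambda>_. borel) Z I" and J: "finite J" "J \<noteq> {}" "J \<subseteq> I"
    and p: "\<And>j. j \<in> J \<Longrightarrow> prob (Z j -` cball 0 c \<inter> space M) = p" and c: "0 \<le> c"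
  shows "ennreal (c * (1 - p ^ card J)) \<le> (\<integral>\<^sup>+\<omega>. (SUP j\<in>J. ennreal (norm (Z j \<omega>))) \<partial>M)"
proof -
  define U where "U = space M - (\<Inter>j\<in>J. Z j -` cball 0 c \<inter> space M)"
  have rv: "random_variable borel (Z j)" if "j \<in> J" for j
    using indep that J(3) unfolding indep_vars_def2 by blast
  have events: "(\<Inter>j\<in>J. Z j -` cball 0 c \<inter> space M) \<in> events"
    using J rv by (intro sets.finite_INT measurable_sets) auto
  have "prob (\<Inter>j\<in>J. Z j -` cball 0 c \<inter> space M) = (\<Prod>j\<in>J. prob (Z j -` cball 0 c \<inter> space M))"
    using J indep unfolding indep_vars_def2
    by (intro indep_setsD[where F="\<lambda>i. {Z i -` A \<inter> space M |A. A \<in> sets borel}" and I=I]) auto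
  also have "\<dots> = p ^ card J"
    using p by simp
  finally have "prob U = 1 - p ^ card J"
    unfolding U_def using prob_compl[OF events] by simp
  moreover have "U \<in> events"
    unfolding U_def using events by auto
  ultimately have "ennreal (c * (1 - p ^ card J)) = (\<integral>\<^sup>+\<omega>. ennreal c * indicator U \<omega> \<partial>M)"
    using c measure_nonneg[of M U]
    by (simp add: nn_integral_cmult_indicator emeasure_eq_measure ennreal_mult)
  also have "\<dots> \<le> (\<integral>\<^sup>+\<omega>. (SUP j\<in>J. ennreal (norm (Z j \<omega>))) \<partial>M)"
  proof (intro nn_integral_mono)
    fix \<omega> assume \<omega>: "\<omega> \<in> space M"
    show "ennreal c * indicator U \<omega> \<le> (SUP j\<in>J. ennreal (norm (Z j \<omega>)))"
    proof (cases "\<omega> \<in> U")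
      case True
      then obtain j where j: "j \<in> J" "c < norm (Z j \<omega>)"
        using \<omega> J(2) unfolding U_def by (auto simp: dist_norm not_le)
      then have "ennreal c \<le> ennreal (norm (Z j \<omega>))"
        by (intro ennreal_leI) simp
      also have "\<dots> \<le> (SUP j\<in>J. ennreal (norm (Z j \<omega>)))"
        using j by (intro SUP_upper)
      finally show ?thesis
        using True by simp
    qed simp
  qed
  finally show ?thesis .
qed

text \<open>If each copy stays in \<open>cball 0 c\<close> only with probability \<open>p < 1\<close>, then among \<open>K\<close>
  independent copies one leaves it with probability \<open>1 - p\<^sup>K \<rightarrow> 1\<close>; so \<open>p = 1\<close> as soon as
  \<open>c\<close> exceeds the expected supremum.\<close>

lemma (in prob_space) iid_AE_bounded_if_integrable_sup:
  fixes Z :: "'i \<Rightarrow> 'a \<Rightarrow> 'b::real_normed_vector"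
  assumes indep: "indep_vars (\<lambda>_. borel) Z I"
    and ident: "\<And>i. i \<in> I \<Longrightarrow> distr M borel (Z i) = distr M borel (Z i0)" and i0: "i0 \<in> I"
    and J: "J \<subseteq> I" "infinite J"
    and sup: "(\<integral>\<^sup>+\<omega>. (SUP j\<in>J. ennreal (norm (Z j \<omega>))) \<partial>M) < \<infinity>"
  shows "\<exists>c. \<forall>i\<in>I. AE \<omega> in M. norm (Z i \<omega>) \<le> c"
proof -
  define C where "C = (\<integral>\<^sup>+\<omega>. (SUP j\<in>J. ennreal (norm (Z j \<omega>))) \<partial>M)"
  define c where "c = enn2real C + 1"
  define p where "p = prob (Z i0 -` cball 0 c \<inter> space M)"
  have rv: "random_variable borel (Z i)" if "i \<in> I" for i
    using indep that unfolding indep_vars_def2 by blast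
  have prob_Z: "prob (Z i -` cball 0 c \<inter> space M) = p" if "i \<in> I" for i
    using ident[OF that] measure_distr[OF rv[OF that], of "cball 0 c"]
      measure_distr[OF rv[OF i0], of "cball 0 c"]
    unfolding p_def by simp
  have "p = 1"
  proof (rule ccontr)
    assume "p \<noteq> 1"
    then have p: "0 \<le> p" "p < 1"
      unfolding p_def using prob_le_1 by (auto simp: less_le)
    have "c * (1 - p ^ Suc K) \<le> enn2real C" for K
    proof -
      obtain J' where J': "finite J'" "card J' = Suc K" "J' \<subseteq> J"
        using infinite_arbitrarily_large[OF J(2)] by blast
      then have "ennreal (c * (1 - p ^ Suc K)) \<le> (\<integral>\<^sup>+\<omega>. (SUP j\<in>J'. ennreal (norm (Z j \<omega>))) \<partial>M)"
        using nn_integral_SUP_norm_ge_if_indep[OF indep, of J' c p] J prob_Z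
        unfolding c_def by fastforce
      also have "\<dots> \<le> C"
        unfolding C_def using J' by (intro nn_integral_mono SUP_subset_mono) auto
      also have "C = ennreal (enn2real C)"
        using sup unfolding C_def by simp
      finally show ?thesis
        by (simp add: ennreal_le_iff)
    qed
    moreover have "(\<lambda>K. c * (1 - p ^ Suc K)) \<longlonglongrightarrow> c * (1 - 0)"
      using p by (intro tendsto_intros LIMSEQ_power_zero[THEN LIMSEQ_Suc]) auto
    ultimately have "c \<le> enn2real C"
      by (intro LIMSEQ_le_const2) auto
    then show False
      unfolding c_def by simp
  qed
  have "AE \<omega> in M. norm (Z i \<omega>) \<le> c" if "i \<in> I" for i
    using AE_prob_1[of "Z i -` cball 0 c \<inter> space M"] prob_Z[OF that] \<open>p = 1\<close>
    by (auto simp: dist_norm elim: eventually_mono)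
  then show ?thesis
    by blast
qed

lemma (in prob_space) integral_mult_indep_set:
  fixes U W :: "'a \<Rightarrow> real"
  assumes indep: "indep_set \<Sigma> (sets G)" and \<Sigma>: "sigma_algebra (space M) \<Sigma>"
    and G: "subalgebra M G"
    and U: "U \<in> borel_measurable G" "integrable M U"
    and W: "W \<in> borel_measurable M" "integrable M W"
      "\<And>A. A \<in> sets borel \<Longrightarrow> W -` A \<inter> space M \<in> \<Sigma>"
  shows "integrable M (\<lambda>\<omega>. U \<omega> * W \<omega>)"
    and "(\<integral>\<omega>. U \<omega> * W \<omega> \<partial>M) = (\<integral>\<omega>. U \<omega> \<partial>M) * (\<integral>\<omega>. W \<omega> \<partial>M)"
proof -
  have "{U -` A \<inter> space M |A. A \<in> sets borel} \<subseteq> sets G"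
    using U(1) G by (auto simp: subalgebra_def measurable_def)
  from sets.sigma_sets_subset[OF this]
  have sub_G: "sigma_sets (space M) {U -` A \<inter> space M |A. A \<in> sets borel} \<subseteq> sets G"
    using G by (simp add: subalgebra_def)
  have sub_\<Sigma>: "sigma_sets (space M) {W -` A \<inter> space M |A. A \<in> sets borel} \<subseteq> \<Sigma>"
    using W(3) by (intro sigma_algebra.sigma_sets_subset[OF \<Sigma>]) auto
  have "indep_var borel W borel U"
    unfolding indep_var_eq
  proof (intro conjI)
    show "random_variable borel W" "random_variable borel U"
      using W(1) measurable_from_subalg[OF G U(1)] by auto
    show "indep_set (sigma_sets (space M) {W -` A \<inter> space M |A. A \<in> sets borel})
        (sigma_sets (space M) {U -` A \<inter> space M |A. A \<in> sets borel})"
      using indep unfolding indep_set_def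
      by (rule indep_sets_mono_sets) (use sub_G sub_\<Sigma> in \<open>auto split: bool.split\<close>)
  qed
  from indep_var_integrable[OF this W(2) U(2)] indep_var_lebesgue_integral[OF this W(2) U(2)]
  show "integrable M (\<lambda>\<omega>. U \<omega> * W \<omega>)"
    and "(\<integral>\<omega>. U \<omega> * W \<omega> \<partial>M) = (\<integral>\<omega>. U \<omega> \<partial>M) * (\<integral>\<omega>. W \<omega> \<partial>M)"
    by (simp_all add: mult.commute)
qed

lemma (in prob_space) integral_inner_indep_set:
  fixes U W :: "'a \<Rightarrow> 'b::euclidean_space"
  assumes indep: "indep_set \<Sigma> (sets G)" and \<Sigma>: "sigma_algebra (space M) \<Sigma>"
    and G: "subalgebra M G"
    and U: "U \<in> borel_measurable G" "integrable M U"
    and W: "W \<in> borel_measurable M" "integrable M W"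
      "\<And>A. A \<in> sets borel \<Longrightarrow> W -` A \<inter> space M \<in> \<Sigma>"
  shows "integrable M (\<lambda>\<omega>. U \<omega> \<bullet> W \<omega>)"
    and "(\<integral>\<omega>. U \<omega> \<bullet> W \<omega> \<partial>M) = (\<integral>\<omega>. U \<omega> \<partial>M) \<bullet> (\<integral>\<omega>. W \<omega> \<partial>M)"
proof -
  have W_b: "(\<lambda>\<omega>. W \<omega> \<bullet> b) -` A \<inter> space M \<in> \<Sigma>" if "A \<in> sets borel" for A b
    using W(3)[OF measurable_sets[OF borel_measurable_inner[OF measurable_ident_sets[OF refl]
      measurable_const] that]] by (simp add: vimage_def)
  note comp = integral_mult_indep_set[OF indep \<Sigma> G _ _ _ _ W_b, of "\<lambda>\<omega>. U \<omega> \<bullet> b" for b]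
  have comp_int: "integrable M (\<lambda>\<omega>. (U \<omega> \<bullet> b) * (W \<omega> \<bullet> b))"
    and comp_eq: "(\<integral>\<omega>. (U \<omega> \<bullet> b) * (W \<omega> \<bullet> b) \<partial>M) = (\<integral>\<omega>. U \<omega> \<bullet> b \<partial>M) * (\<integral>\<omega>. W \<omega> \<bullet> b \<partial>M)" for b
    using comp[of b] U W(1,2) by auto
  have inner_eq: "U \<omega> \<bullet> W \<omega> = (\<Sum>b\<in>Basis. (U \<omega> \<bullet> b) * (W \<omega> \<bullet> b))" for \<omega>
    by (rule euclidean_inner)
  show "integrable M (\<lambda>\<omega>. U \<omega> \<bullet> W \<omega>)"
    unfolding inner_eq using comp_int by auto
  have "(\<integral>\<omega>. U \<omega> \<bullet> W \<omega> \<partial>M) = (\<Sum>b\<in>Basis. (\<integral>\<omega>. U \<omega> \<bullet> b \<partial>M) * (\<integral>\<omega>. W \<omega> \<bullet> b \<partial>M))"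
    unfolding inner_eq using comp_int comp_eq by (simp add: Bochner_Integration.integral_sum)
  also have "\<dots> = (\<integral>\<omega>. U \<omega> \<partial>M) \<bullet> (\<integral>\<omega>. W \<omega> \<partial>M)"
    using U(2) W(2) by (simp add: euclidean_inner[of "integral\<^sup>L M U" "integral\<^sup>L M W"])
  finally show "(\<integral>\<omega>. U \<omega> \<bullet> W \<omega> \<partial>M) = (\<integral>\<omega>. U \<omega> \<partial>M) \<bullet> (\<integral>\<omega>. W \<omega> \<partial>M)" .
qed

lemma (in prob_space) AE_step_size_path:
  fixes \<gamma> :: "nat \<Rightarrow> 'a \<Rightarrow> real"
  assumes \<kappa>: "0 < \<kappa>"
    and limsup: "AE \<omega> in M. limsup (\<lambda>n. ereal (\<gamma> n \<omega>)) = 0"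
    and diverge: "AE \<omega> in M. (\<Sum>n. ennreal \<bar>\<gamma> (Suc n) \<omega>\<bar>) = \<infinity>"
    and mono: "\<And>n. n \<ge> 1 \<Longrightarrow> (AE \<omega> in M. \<gamma> (Suc n) \<omega> \<le> \<gamma> n \<omega> \<and> \<gamma> n \<omega> \<le> 1 / \<kappa>)"
  shows "AE \<omega> in M. (\<forall>n. 0 \<le> \<gamma> (Suc n) \<omega> \<and> \<kappa> * \<gamma> (Suc n) \<omega> \<le> 1)
    \<and> (\<lambda>n. \<gamma> (Suc n) \<omega>) \<longlonglongrightarrow> 0 \<and> (\<forall>t. \<exists>n. t \<le> (\<Sum>k<n. \<gamma> (Suc k) \<omega>))"
proof -
  have "AE \<omega> in M. \<forall>n. n \<ge> 1 \<longrightarrow> \<gamma> (Suc n) \<omega> \<le> \<gamma> n \<omega> \<and> \<gamma> n \<omega> \<le> 1 / \<kappa>"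
    unfolding AE_all_countable by (intro allI AE_impI mono)
  with limsup diverge show ?thesis
    by eventually_elim (rule step_size_path[OF \<kappa>]; auto)
qed

lemma integral_eq_if_distr_eq:
  fixes X Y :: "'a \<Rightarrow> 'b::{banach, second_countable_topology}"
  assumes "X \<in> borel_measurable M" "Y \<in> borel_measurable M" "distr M borel X = distr M borel Y"
  shows "integral\<^sup>L M X = integral\<^sup>L M Y"
  using integral_distr[OF assms(1), of "\<lambda>x. x"] integral_distr[OF assms(2), of "\<lambda>x. x"] assms(3)
  by simp

lemma (in prob_space) AE_iid_family_bounded:
  fixes X :: "nat \<Rightarrow> nat \<Rightarrow> 'a \<Rightarrow> 'b::real_normed_vector"
  assumes Mb: "Mb \<ge> 1"
    and indep: "indep_vars (\<lambda>_. borel) (\<lambda>(n, m). X n m) {(n, m). n \<ge> 1 \<and> m \<in> {1..Mb}}"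
    and ident: "\<And>n m. n \<ge> 1 \<Longrightarrow> m \<in> {1..Mb} \<Longrightarrow> distr M borel (X n m) = distr M borel (X 1 1)"
    and sup: "(\<integral>\<^sup>+\<omega>. (SUP n\<in>{1..}. ennreal (norm (X n 1 \<omega>))) \<partial>M) < \<infinity>"
  shows "\<exists>B. AE \<omega> in M. \<forall>n m. n \<ge> 1 \<longrightarrow> m \<in> {1..Mb} \<longrightarrow> norm (X n m \<omega>) \<le> B"
proof -
  define I :: "(nat \<times> nat) set" where "I = {(n, m). n \<ge> 1 \<and> m \<in> {1..Mb}}"
  define J where "J = (\<lambda>n::nat. (n, 1::nat)) ` {1..}"
  have "inj_on (\<lambda>n::nat. (n, 1::nat)) {1..}"
    by (simp add: inj_on_def)
  then have inf: "infinite J"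
    unfolding J_def using infinite_Ici[of "1::nat"] finite_imageD by blast
  have sub: "J \<subseteq> I" "(1, 1) \<in> I"
    using Mb unfolding I_def J_def by auto
  have ident': "distr M borel ((\<lambda>(n, m). X n m) i) = distr M borel ((\<lambda>(n, m). X n m) (1, 1))"
    if i: "i \<in> I" for i
  proof -
    obtain n m where "i = (n, m)" "n \<ge> 1" "m \<in> {1..Mb}"
      using i unfolding I_def by auto
    then show ?thesis
      using ident[of n m] by simp
  qed
  have sup': "(\<integral>\<^sup>+\<omega>. (SUP j\<in>J. ennreal (norm ((\<lambda>(n, m). X n m) j \<omega>))) \<partial>M) < \<infinity>"
    using sup unfolding J_def by (simp add: image_image)
  obtain B where B: "\<forall>i\<in>I. AE \<omega> in M. norm ((\<lambda>(n, m). X n m) i \<omega>) \<le> B"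
    using iid_AE_bounded_if_integrable_sup[OF indep[folded I_def] ident' sub(2) sub(1) inf sup'] by blast
  have "AE \<omega> in M. n \<ge> 1 \<longrightarrow> m \<in> {1..Mb} \<longrightarrow> norm (X n m \<omega>) \<le> B" for n m
    using bspec[OF B, of "(n, m)"] unfolding I_def by (cases "n \<ge> 1 \<and> m \<in> {1..Mb}") auto
  then show ?thesis
    by (auto simp: AE_all_countable)
qed

lemma (in prob_space) minibatch_noise_centered:
  fixes Y :: "nat \<Rightarrow> 'a \<Rightarrow> 'b::euclidean_space"
  assumes Mb: "Mb \<ge> 1" and G: "subalgebra M G"
    and indep: "indep_set (sigma_sets (space M) (\<Union>m\<in>{1..Mb}. {Y m -` A \<inter> space M | A. A \<in> sets borel}))
      (sets G)"
    and Y: "\<And>m. m \<in> {1..Mb} \<Longrightarrow> Y m \<in> borel_measurable M"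
      "\<And>m. m \<in> {1..Mb} \<Longrightarrow> integrable M (Y m)" "\<And>m. m \<in> {1..Mb} \<Longrightarrow> integral\<^sup>L M (Y m) = \<mu>"
    and U: "U \<in> borel_measurable G" "integrable M U"
  shows "(\<integral>\<omega>. U \<omega> \<bullet> ((1 / real Mb) *\<^sub>R (\<Sum>m=1..Mb. Y m \<omega>) - \<mu>) \<partial>M) = 0"
proof -
  define \<Sigma> where "\<Sigma> = sigma_sets (space M) (\<Union>m\<in>{1..Mb}. {Y m -` A \<inter> space M | A. A \<in> sets borel})"
  have \<Sigma>: "sigma_algebra (space M) \<Sigma>"
    unfolding \<Sigma>_def by (rule sigma_algebra_sigma_sets) auto
  have Y_gen: "Y m -` A \<inter> space M \<in> \<Sigma>" if "m \<in> {1..Mb}" "A \<in> sets borel" for m A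
    unfolding \<Sigma>_def using that by (intro sigma_sets.Basic) blast
  have UY: "integrable M (\<lambda>\<omega>. U \<omega> \<bullet> Y m \<omega>)"
    "(\<integral>\<omega>. U \<omega> \<bullet> Y m \<omega> \<partial>M) = (\<integral>\<omega>. U \<omega> \<partial>M) \<bullet> \<mu>" if m: "m \<in> {1..Mb}" for m
    using integral_inner_indep_set[OF indep[folded \<Sigma>_def] \<Sigma> G U Y(1,2)[OF m] Y_gen[OF m]]
    unfolding Y(3)[OF m] by auto
  have "(\<integral>\<omega>. U \<omega> \<bullet> ((1 / real Mb) *\<^sub>R (\<Sum>m=1..Mb. Y m \<omega>) - \<mu>) \<partial>M)
      = (\<integral>\<omega>. (1 / real Mb) * (\<Sum>m=1..Mb. U \<omega> \<bullet> Y m \<omega>) - U \<omega> \<bullet> \<mu> \<partial>M)"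
    by (simp add: inner_diff_right inner_sum_right)
  also have "\<dots> = (1 / real Mb) * (\<integral>\<omega>. (\<Sum>m=1..Mb. U \<omega> \<bullet> Y m \<omega>) \<partial>M) - (\<integral>\<omega>. U \<omega> \<bullet> \<mu> \<partial>M)"
    using UY(1) U(2) by (subst Bochner_Integration.integral_diff) (auto intro!: Bochner_Integration.integrable_sum)
  also have "\<dots> = (1 / real Mb) * (\<Sum>m=1..Mb. \<integral>\<omega>. U \<omega> \<bullet> Y m \<omega> \<partial>M) - (\<integral>\<omega>. U \<omega> \<partial>M) \<bullet> \<mu>"
    using UY(1) U(2) by (subst Bochner_Integration.integral_sum) auto
  also have "\<dots> = 0"
    using Mb by (simp add: UY(2))
  finally show ?thesis .
qed

lemma (in prob_space) integrable_norm_diff_sq: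
  fixes f :: "'a \<Rightarrow> 'b::{banach, second_countable_topology}"
  assumes f: "f \<in> borel_measurable M" and sq: "(\<integral>\<^sup>+\<omega>. ennreal ((norm (f \<omega>))\<^sup>2) \<partial>M) < \<infinity>"
  shows "integrable M (\<lambda>\<omega>. (norm (f \<omega> - c))\<^sup>2)"
proof (rule Bochner_Integration.integrable_bound[where f="\<lambda>\<omega>. 2 * (norm (f \<omega>))\<^sup>2 + 2 * (norm c)\<^sup>2"])
  have "integrable M (\<lambda>\<omega>. (norm (f \<omega>))\<^sup>2)"
    using f sq by (intro integrableI_nonneg) auto
  then show "integrable M (\<lambda>\<omega>. 2 * (norm (f \<omega>))\<^sup>2 + 2 * (norm c)\<^sup>2)"
    by simp
  have "(norm (f \<omega> - c))\<^sup>2 \<le> 2 * (norm (f \<omega>))\<^sup>2 + 2 * (norm c)\<^sup>2" for \<omega>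
  proof -
    have "(norm (f \<omega> - c))\<^sup>2 \<le> (norm (f \<omega>) + norm c)\<^sup>2"
      using norm_triangle_ineq4 by (intro power_mono) auto
    also have "\<dots> \<le> 2 * (norm (f \<omega>))\<^sup>2 + 2 * (norm c)\<^sup>2"
      using sum_squares_bound[of "norm (f \<omega>)" "norm c"] by (simp add: power2_sum)
    finally show ?thesis .
  qed
  then show "AE \<omega> in M. norm ((norm (f \<omega> - c))\<^sup>2) \<le> norm (2 * (norm (f \<omega>))\<^sup>2 + 2 * (norm c)\<^sup>2)"
    by simp
qed (use f in measurable)

lemma integrable_scaleR_AE_bounded:
  fixes f :: "'a \<Rightarrow> 'b::{banach, second_countable_topology}"
  assumes f: "integrable M f" and w: "w \<in> borel_measurable M" and bound: "AE x in M. \<bar>w x\<bar> \<le> C"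
  shows "integrable M (\<lambda>x. w x *\<^sub>R f x)"
proof (rule Bochner_Integration.integrable_bound[where f="\<lambda>x. C *\<^sub>R f x"])
  show "integrable M (\<lambda>x. C *\<^sub>R f x)" "(\<lambda>x. w x *\<^sub>R f x) \<in> borel_measurable M"
    using f w by (auto intro: borel_measurable_integrable)
  show "AE x in M. norm (w x *\<^sub>R f x) \<le> norm (C *\<^sub>R f x)"
    using bound by eventually_elim (auto intro: mult_right_mono)
qed

lemma integrable_inner_AE_bounded:
  fixes U W :: "'a \<Rightarrow> 'b::euclidean_space"
  assumes U: "integrable M U" and W: "W \<in> borel_measurable M" "AE x in M. norm (W x) \<le> C"
  shows "integrable M (\<lambda>x. U x \<bullet> W x)"
proof (rule Bochner_Integration.integrable_bound[where f="\<lambda>x. C *\<^sub>R U x"])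
  show "integrable M (\<lambda>x. C *\<^sub>R U x)" "(\<lambda>x. U x \<bullet> W x) \<in> borel_measurable M"
    using U W(1) by (auto intro: borel_measurable_integrable)
  show "AE x in M. norm (U x \<bullet> W x) \<le> norm (C *\<^sub>R U x)"
    using W(2)
  proof eventually_elim
    case (elim x)
    have "\<bar>U x \<bullet> W x\<bar> \<le> norm (U x) * norm (W x)"
      by (rule Cauchy_Schwarz_ineq2)
    also have "\<dots> \<le> norm (U x) * \<bar>C\<bar>"
      using elim by (intro mult_left_mono) auto
    finally show ?case
      by (simp add: mult.commute)
  qed
qed

section \<open>Stochastic approximation with bounded centred noise\<close>

text \<open>For minibatch SGD, \<open>e\<close> is the error \<open>\<Theta> - E X\<close> and \<open>\<xi>\<close> the centred minibatch mean;
  \<open>xi_centered\<close> is the form of \<open>E [\<xi>\<^sub>n\<^sub>+\<^sub>1 | F\<^sub>n] = 0\<close> that the argument needs.\<close>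

locale sgd_error_recursion = prob_space M + filtration "space M" F
  for M :: "'w measure" and F :: "nat \<Rightarrow> 'w measure" +
  fixes \<kappa> D :: real and \<gamma> :: "nat \<Rightarrow> 'w \<Rightarrow> real" and e \<xi> :: "nat \<Rightarrow> 'w \<Rightarrow> 'v::euclidean_space"
  assumes kappa_pos: "0 < \<kappa>"
    and subalgebra_F: "\<And>n. subalgebra M (F n)"
    and gamma_predictable: "\<And>n. \<gamma> (Suc n) \<in> borel_measurable (F n)"
    and e_adapted: "\<And>n. e n \<in> borel_measurable (F n)"
    and xi_measurable: "\<And>n. \<xi> (Suc n) \<in> borel_measurable M"
    and e_Suc: "\<And>n \<omega>. \<omega> \<in> space M \<Longrightarrow>
      e (Suc n) \<omega> = (1 - \<kappa> * \<gamma> (Suc n) \<omega>) *\<^sub>R e n \<omega> + (\<kappa> * \<gamma> (Suc n) \<omega>) *\<^sub>R \<xi> (Suc n) \<omega>"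
    and xi_centered: "\<And>n U. U \<in> borel_measurable (F n) \<Longrightarrow> integrable M U \<Longrightarrow>
      (\<integral>\<omega>. U \<omega> \<bullet> \<xi> (Suc n) \<omega> \<partial>M) = 0"
    and xi_bounded: "AE \<omega> in M. \<forall>n. norm (\<xi> (Suc n) \<omega>) \<le> D"
    and gamma_bounds: "AE \<omega> in M. \<forall>n. 0 \<le> \<gamma> (Suc n) \<omega> \<and> \<kappa> * \<gamma> (Suc n) \<omega> \<le> 1"
    and gamma_tendsto: "AE \<omega> in M. (\<lambda>n. \<gamma> (Suc n) \<omega>) \<longlonglongrightarrow> 0"
    and gamma_unbounded: "AE \<omega> in M. \<forall>t. \<exists>n. t \<le> (\<Sum>k<n. \<gamma> (Suc k) \<omega>)"
    and integrable_e0: "integrable M (\<lambda>\<omega>. (norm (e 0 \<omega>))\<^sup>2)"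
begin

definition S :: "nat \<Rightarrow> 'w \<Rightarrow> real" where
  "S n \<omega> = (\<Sum>k<n. \<gamma> (Suc k) \<omega>)"

definition A :: "nat \<Rightarrow> 'w \<Rightarrow> real" where
  "A n \<omega> = exp (\<kappa> * S n \<omega>)"

definition V :: "nat \<Rightarrow> 'w \<Rightarrow> real" where
  "V n \<omega> = (norm (e n \<omega>))\<^sup>2"

definition admissible :: "'w \<Rightarrow> bool" where
  "admissible \<omega> \<longleftrightarrow> (\<forall>n. 0 \<le> \<gamma> (Suc n) \<omega> \<and> \<kappa> * \<gamma> (Suc n) \<omega> \<le> 1 \<and> norm (\<xi> (Suc n) \<omega>) \<le> D)
    \<and> (\<lambda>n. \<gamma> (Suc n) \<omega>) \<longlonglongrightarrow> 0 \<and> (\<forall>t. \<exists>n. t \<le> S n \<omega>)"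

text \<open>\<open>passage t\<close> is the paper's \<open>N\<^sub>t\<close>; its value is junk on the null set where \<open>S\<close> stays
  below \<open>t\<close>. The weights \<open>before_passage t k\<close> are almost surely the indicators of
  \<open>k \<le> passage t\<close> (\<open>before_passage_eq\<close>), but are written through \<open>S\<close> so that they are
  \<open>F (k - 1)\<close>-measurable; telescoping the Lyapunov step along them is optional stopping.\<close>

definition passage :: "real \<Rightarrow> 'w \<Rightarrow> nat" where
  "passage t \<omega> = (LEAST n. t \<le> S n \<omega>)"

definition before_passage :: "real \<Rightarrow> nat \<Rightarrow> 'w \<Rightarrow> real" where
  "before_passage t k \<omega> = of_bool (\<forall>j<k. S j \<omega> < t)"

lemma AE_admissible: "AE \<omega> in M. admissible \<omega>"
  using xi_bounded gamma_bounds gamma_tendsto gamma_unbounded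
  by eventually_elim (auto simp: admissible_def S_def)

lemma measurable_F_mono: "f \<in> borel_measurable (F i) \<Longrightarrow> i \<le> j \<Longrightarrow> f \<in> borel_measurable (F j)"
  by (rule measurable_from_subalg[of "F j" "F i"]) (auto simp: subalgebra_def space_F sets_F_mono)

lemma measurable_F_M: "f \<in> borel_measurable (F i) \<Longrightarrow> f \<in> borel_measurable M"
  by (rule measurable_from_subalg[OF subalgebra_F])

lemma S_measurable_F: "j \<le> Suc n \<Longrightarrow> S j \<in> borel_measurable (F n)"
  unfolding S_def
proof (intro borel_measurable_sum)
  fix k assume "j \<le> Suc n" "k \<in> {..<j}"
  then show "\<gamma> (Suc k) \<in> borel_measurable (F n)"
    using measurable_F_mono[OF gamma_predictable[of k]] by simp
qed

lemma A_measurable_F: "j \<le> Suc n \<Longrightarrow> A j \<in> borel_measurable (F n)"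
  using S_measurable_F unfolding A_def by measurable

lemma before_passage_measurable_F: "k \<le> Suc n \<Longrightarrow> before_passage t k \<in> borel_measurable (F n)"
proof -
  assume k: "k \<le> Suc n"
  have [measurable]: "S j \<in> borel_measurable (F n)" if "j < k" for j
    using S_measurable_F[of j n] that k by simp
  show ?thesis
    unfolding before_passage_def by measurable
qed

lemma measurable_M [measurable]:
  "\<gamma> (Suc n) \<in> borel_measurable M" "e n \<in> borel_measurable M" "S n \<in> borel_measurable M"
  "A n \<in> borel_measurable M" "V n \<in> borel_measurable M" "before_passage t n \<in> borel_measurable M"
  using measurable_F_M[OF gamma_predictable] measurable_F_M[OF e_adapted]
    measurable_F_M[OF S_measurable_F[of n n]] measurable_F_M[OF A_measurable_F[of n n]]
    measurable_F_M[OF before_passage_measurable_F[of n n]]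
  unfolding V_def by (auto intro: borel_measurable_power borel_measurable_norm)

lemma passage_measurable: "passage t \<in> measurable M (count_space UNIV)"
  unfolding passage_def[abs_def] by measurable

lemma S_Suc: "S (Suc n) \<omega> = S n \<omega> + \<gamma> (Suc n) \<omega>"
  unfolding S_def by simp

lemma A_Suc: "A (Suc n) \<omega> = A n \<omega> * exp (\<kappa> * \<gamma> (Suc n) \<omega>)"
  unfolding A_def S_Suc by (simp add: distrib_left exp_add)

lemma A_pos: "0 < A n \<omega>"
  unfolding A_def by simp

lemma V_nonneg: "0 \<le> V n \<omega>"
  unfolding V_def by simp

lemma A_le_exp:
  assumes "admissible \<omega>"
  shows "A n \<omega> \<le> exp n"
proof -
  have "\<kappa> * S n \<omega> \<le> n"
  proof (induction n)
    case (Suc n)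
    have "\<kappa> * \<gamma> (Suc n) \<omega> \<le> 1"
      using assms unfolding admissible_def by blast
    with Suc show ?case
      by (simp add: S_Suc distrib_left)
  qed (simp add: S_def)
  then show ?thesis
    unfolding A_def by simp
qed

lemma norm_e_le:
  assumes "admissible \<omega>" "\<omega> \<in> space M"
  shows "norm (e n \<omega>) \<le> norm (e 0 \<omega>) + n * D"
proof (induction n)
  case (Suc n)
  define a where "a = \<kappa> * \<gamma> (Suc n) \<omega>"
  have a: "0 \<le> a" "a \<le> 1" and \<xi>: "norm (\<xi> (Suc n) \<omega>) \<le> D"
    using assms(1) kappa_pos unfolding admissible_def a_def by auto
  have "norm (e (Suc n) \<omega>) \<le> (1 - a) * norm (e n \<omega>) + a * norm (\<xi> (Suc n) \<omega>)"
    using e_Suc[OF assms(2), of n] norm_triangle_ineq[of "(1 - a) *\<^sub>R e n \<omega>" "a *\<^sub>R \<xi> (Suc n) \<omega>"] a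
    unfolding a_def by simp
  also have "\<dots> \<le> norm (e n \<omega>) + D"
    using a \<xi> by (smt (verit) mult_left_le_one_le mult_nonneg_nonneg norm_ge_zero)
  finally show ?case
    using Suc by (simp add: algebra_simps)
qed simp

lemma integrable_V: "integrable M (V n)"
proof (rule Bochner_Integration.integrable_bound[where f="\<lambda>\<omega>. 2 * V 0 \<omega> + 2 * (n * D)\<^sup>2"])
  show "integrable M (\<lambda>\<omega>. 2 * V 0 \<omega> + 2 * (n * D)\<^sup>2)"
    using integrable_e0 unfolding V_def by simp
  show "AE \<omega> in M. norm (V n \<omega>) \<le> norm (2 * V 0 \<omega> + 2 * (n * D)\<^sup>2)"
    using AE_admissible AE_space
  proof eventually_elim
    case (elim \<omega>)
    have "V n \<omega> \<le> (norm (e 0 \<omega>) + n * D)\<^sup>2"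
      unfolding V_def using norm_e_le[OF elim] by (intro power_mono) auto
    also have "\<dots> \<le> 2 * V 0 \<omega> + 2 * (n * D)\<^sup>2"
      using sum_squares_bound[of "norm (e 0 \<omega>)" "n * D"] by (simp add: power2_sum V_def)
    finally show ?case
      by (simp add: V_def)
  qed
qed simp

lemma integrable_e: "integrable M (e n)"
proof (rule Bochner_Integration.integrable_bound[where f="\<lambda>\<omega>. 1 + V n \<omega>"])
  show "integrable M (\<lambda>\<omega>. 1 + V n \<omega>)"
    using integrable_V by simp
  have "norm (e n \<omega>) \<le> 1 + V n \<omega>" for \<omega>
    using zero_le_power2[of "norm (e n \<omega>) - 1 / 2"] unfolding V_def
    by (simp add: power2_diff power2_eq_square field_simps)
  then show "AE \<omega> in M. norm (e n \<omega>) \<le> norm (1 + V n \<omega>)"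
    by (simp add: V_nonneg)
qed simp

definition cross_weight :: "nat \<Rightarrow> 'w \<Rightarrow> real" where
  "cross_weight n \<omega> = 2 * A (Suc n) \<omega> * (1 - \<kappa> * \<gamma> (Suc n) \<omega>) * (\<kappa> * \<gamma> (Suc n) \<omega>)"

lemma cross_weight_measurable_F: "cross_weight n \<in> borel_measurable (F n)"
  using A_measurable_F[of "Suc n" n] gamma_predictable[of n] unfolding cross_weight_def by measurable

lemma abs_cross_weight_le: "admissible \<omega> \<Longrightarrow> \<bar>cross_weight n \<omega>\<bar> \<le> 2 * exp (Suc n)"
proof -
  assume adm: "admissible \<omega>"
  define a where "a = \<kappa> * \<gamma> (Suc n) \<omega>"
  have "0 \<le> a" "0 \<le> 1 - a"
    using adm kappa_pos unfolding admissible_def a_def by auto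
  then have "\<bar>cross_weight n \<omega>\<bar> = 2 * (A (Suc n) \<omega> * ((1 - a) * a))"
    using A_pos[of "Suc n" \<omega>] unfolding cross_weight_def a_def[symmetric] by (simp add: abs_mult)
  also have "\<dots> \<le> 2 * (exp (Suc n) * 1)"
    using \<open>0 \<le> a\<close> \<open>0 \<le> 1 - a\<close> A_le_exp[OF adm, of "Suc n"]
    by (intro mult_left_mono mult_mono mult_le_one) auto
  finally show ?thesis
    by simp
qed

lemma A_V_Suc_le:
  assumes adm: "admissible \<omega>" and \<omega>: "\<omega> \<in> space M"
  shows "A (Suc n) \<omega> * V (Suc n) \<omega> \<le> A n \<omega> * V n \<omega> + cross_weight n \<omega> * (e n \<omega> \<bullet> \<xi> (Suc n) \<omega>)
    + (\<kappa> * D)\<^sup>2 * ((\<gamma> (Suc n) \<omega>)\<^sup>2 * A (Suc n) \<omega>)"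
proof -
  define a where "a = \<kappa> * \<gamma> (Suc n) \<omega>"
  have a: "0 \<le> a" "a \<le> 1" and \<xi>: "norm (\<xi> (Suc n) \<omega>) \<le> D"
    using adm kappa_pos unfolding admissible_def a_def by auto
  have V_Suc: "V (Suc n) \<omega> = (1 - a)\<^sup>2 * V n \<omega> + 2 * (1 - a) * a * (e n \<omega> \<bullet> \<xi> (Suc n) \<omega>)
      + a\<^sup>2 * (norm (\<xi> (Suc n) \<omega>))\<^sup>2"
    unfolding V_def e_Suc[OF \<omega>] norm_scaleR_add_scaleR_sq a_def ..
  have "A (Suc n) \<omega> * (1 - a)\<^sup>2 = A n \<omega> * (exp a * (1 - a)\<^sup>2)"
    unfolding A_Suc a_def by simp
  also have "\<dots> \<le> A n \<omega>"
    using exp_mult_one_minus_sq_le_one[OF a] A_pos[of n \<omega>] by (simp add: mult_left_le)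
  finally have contraction: "A (Suc n) \<omega> * (1 - a)\<^sup>2 * V n \<omega> \<le> A n \<omega> * V n \<omega>"
    using V_nonneg by (rule mult_right_mono)
  have "a\<^sup>2 * (norm (\<xi> (Suc n) \<omega>))\<^sup>2 \<le> a\<^sup>2 * D\<^sup>2"
    using \<xi> by (intro mult_left_mono power_mono) auto
  also have "\<dots> = (\<kappa> * D)\<^sup>2 * (\<gamma> (Suc n) \<omega>)\<^sup>2"
    unfolding a_def by (simp add: power_mult_distrib)
  finally have "a\<^sup>2 * (norm (\<xi> (Suc n) \<omega>))\<^sup>2 \<le> (\<kappa> * D)\<^sup>2 * (\<gamma> (Suc n) \<omega>)\<^sup>2" .
  then have noise: "A (Suc n) \<omega> * (a\<^sup>2 * (norm (\<xi> (Suc n) \<omega>))\<^sup>2)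
      \<le> (\<kappa> * D)\<^sup>2 * ((\<gamma> (Suc n) \<omega>)\<^sup>2 * A (Suc n) \<omega>)"
    using A_pos[of "Suc n" \<omega>] by (simp add: mult_left_mono mult_ac)
  show ?thesis
    using contraction noise unfolding V_Suc cross_weight_def a_def[symmetric]
    by (simp add: algebra_simps)
qed

lemma cross_term_integral_zero:
  assumes H: "H \<in> borel_measurable (F n)" "\<And>\<omega>. \<bar>H \<omega>\<bar> \<le> 1"
  shows "integrable M (\<lambda>\<omega>. H \<omega> * cross_weight n \<omega> * (e n \<omega> \<bullet> \<xi> (Suc n) \<omega>))"
    and "(\<integral>\<omega>. H \<omega> * cross_weight n \<omega> * (e n \<omega> \<bullet> \<xi> (Suc n) \<omega>) \<partial>M) = 0"
proof -
  define U where "U \<omega> = (H \<omega> * cross_weight n \<omega>) *\<^sub>R e n \<omega>" for \<omega>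
  have U_F: "U \<in> borel_measurable (F n)"
    unfolding U_def using H(1) cross_weight_measurable_F e_adapted by measurable
  have "AE \<omega> in M. \<bar>H \<omega> * cross_weight n \<omega>\<bar> \<le> 2 * exp (Suc n)"
    using AE_admissible
  proof eventually_elim
    case (elim \<omega>)
    show ?case
      using H(2)[of \<omega>] abs_cross_weight_le[OF elim, of n]
      by (simp add: abs_mult mult_le_one mult_mono[of _ 1 _ "2 * exp (Suc n)", simplified])
  qed
  then have U_int: "integrable M U"
    unfolding U_def using integrable_e measurable_F_M[OF H(1)] measurable_F_M[OF cross_weight_measurable_F]
    by (intro integrable_scaleR_AE_bounded) auto
  have U_inner: "U \<omega> \<bullet> \<xi> (Suc n) \<omega> = H \<omega> * cross_weight n \<omega> * (e n \<omega> \<bullet> \<xi> (Suc n) \<omega>)" for \<omega>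
    unfolding U_def by simp
  show "integrable M (\<lambda>\<omega>. H \<omega> * cross_weight n \<omega> * (e n \<omega> \<bullet> \<xi> (Suc n) \<omega>))"
    unfolding U_inner[symmetric]
    by (rule integrable_inner_AE_bounded[OF U_int xi_measurable]) (use xi_bounded in \<open>auto elim: eventually_mono\<close>)
  show "(\<integral>\<omega>. H \<omega> * cross_weight n \<omega> * (e n \<omega> \<bullet> \<xi> (Suc n) \<omega>) \<partial>M) = 0"
    using xi_centered[OF U_F U_int] unfolding U_inner .
qed

lemma abs_weighted_A_le:
  assumes "admissible \<omega>" "0 \<le> h" "h \<le> 1"
  shows "\<bar>h * A k \<omega>\<bar> \<le> exp k"
  using assms A_pos[of k \<omega>] A_le_exp[OF assms(1), of k] mult_mono[of h 1 "A k \<omega>" "exp k"]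
  by (simp add: abs_mult)

lemma integrable_weighted_A_V:
  assumes H: "H \<in> borel_measurable M" "\<And>\<omega>. 0 \<le> H \<omega>" "\<And>\<omega>. H \<omega> \<le> 1"
  shows "integrable M (\<lambda>\<omega>. H \<omega> * A k \<omega> * V k \<omega>)"
proof -
  have "AE \<omega> in M. \<bar>H \<omega> * A k \<omega>\<bar> \<le> exp k"
    using AE_admissible by eventually_elim (use H abs_weighted_A_le in auto)
  then show ?thesis
    using integrable_scaleR_AE_bounded[OF integrable_V, of "\<lambda>\<omega>. H \<omega> * A k \<omega>"] H(1) by simp
qed

lemma integrable_weighted_noise_term:
  assumes H: "H \<in> borel_measurable M" "\<And>\<omega>. 0 \<le> H \<omega>" "\<And>\<omega>. H \<omega> \<le> 1"
  shows "integrable M (\<lambda>\<omega>. H \<omega> * ((\<gamma> (Suc n) \<omega>)\<^sup>2 * A (Suc n) \<omega>))"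
proof (rule integrable_const_bound)
  show "AE \<omega> in M. norm (H \<omega> * ((\<gamma> (Suc n) \<omega>)\<^sup>2 * A (Suc n) \<omega>)) \<le> exp (Suc n) / \<kappa>\<^sup>2"
    using AE_admissible
  proof eventually_elim
    case (elim \<omega>)
    have "(\<kappa> * \<gamma> (Suc n) \<omega>)\<^sup>2 \<le> 1"
      using elim kappa_pos unfolding admissible_def by (auto intro!: power_le_one)
    moreover have "\<kappa>\<^sup>2 * \<bar>H \<omega> * ((\<gamma> (Suc n) \<omega>)\<^sup>2 * A (Suc n) \<omega>)\<bar>
        = \<bar>H \<omega> * A (Suc n) \<omega>\<bar> * (\<kappa> * \<gamma> (Suc n) \<omega>)\<^sup>2"
      by (simp add: abs_mult power_mult_distrib mult_ac)
    ultimately have "\<kappa>\<^sup>2 * \<bar>H \<omega> * ((\<gamma> (Suc n) \<omega>)\<^sup>2 * A (Suc n) \<omega>)\<bar> \<le> exp (Suc n) * 1"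
      using abs_weighted_A_le[OF elim H(2,3)[of \<omega>], where k = "Suc n"]
      by (metis mult_mono exp_ge_zero zero_le_power2)
    then show ?case
      using kappa_pos by (simp add: field_simps)
  qed
qed (use H(1) in measurable)

lemma lyapunov_step:
  assumes H: "H \<in> borel_measurable (F n)" "\<And>\<omega>. 0 \<le> H \<omega>" "\<And>\<omega>. H \<omega> \<le> 1"
  shows "(\<integral>\<^sup>+\<omega>. ennreal (H \<omega> * A (Suc n) \<omega> * V (Suc n) \<omega>) \<partial>M)
    \<le> (\<integral>\<^sup>+\<omega>. ennreal (H \<omega> * A n \<omega> * V n \<omega>) \<partial>M)
      + ennreal ((\<kappa> * D)\<^sup>2) * (\<integral>\<^sup>+\<omega>. ennreal (H \<omega> * ((\<gamma> (Suc n) \<omega>)\<^sup>2 * A (Suc n) \<omega>)) \<partial>M)"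
proof -
  define c where "c = (\<kappa> * D)\<^sup>2"
  define f where "f k \<omega> = H \<omega> * A k \<omega> * V k \<omega>" for k \<omega>
  define g where "g \<omega> = H \<omega> * ((\<gamma> (Suc n) \<omega>)\<^sup>2 * A (Suc n) \<omega>)" for \<omega>
  define x where "x \<omega> = H \<omega> * cross_weight n \<omega> * (e n \<omega> \<bullet> \<xi> (Suc n) \<omega>)" for \<omega>
  note H_M = measurable_F_M[OF H(1)]
  note f_int = integrable_weighted_A_V[OF H_M H(2,3), folded f_def]
  note g_int = integrable_weighted_noise_term[OF H_M H(2,3), where n = n, folded g_def]
  note x = cross_term_integral_zero[of H n, folded x_def]
  have "AE \<omega> in M. f (Suc n) \<omega> \<le> f n \<omega> + x \<omega> + c * g \<omega>"
    using AE_admissible AE_space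
  proof eventually_elim
    case (elim \<omega>)
    from mult_left_mono[OF A_V_Suc_le[OF elim] H(2)]
    show ?case
      unfolding f_def g_def x_def c_def by (simp add: algebra_simps)
  qed
  then have "(\<integral>\<omega>. f (Suc n) \<omega> \<partial>M) \<le> (\<integral>\<omega>. f n \<omega> + x \<omega> + c * g \<omega> \<partial>M)"
    using f_int g_int x(1) H by (intro integral_mono_AE) auto
  also have "\<dots> = (\<integral>\<omega>. f n \<omega> \<partial>M) + c * (\<integral>\<omega>. g \<omega> \<partial>M)"
    using f_int g_int x H by simp
  finally have ineq: "(\<integral>\<omega>. f (Suc n) \<omega> \<partial>M) \<le> (\<integral>\<omega>. f n \<omega> \<partial>M) + c * (\<integral>\<omega>. g \<omega> \<partial>M)" .
  have f_nonneg: "0 \<le> f k \<omega>" and g_nonneg: "0 \<le> g \<omega>" for k \<omega>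
    unfolding f_def g_def using H(2) A_pos V_nonneg by (auto intro!: mult_nonneg_nonneg intro: less_imp_le)
  have "0 \<le> c" "0 \<le> (\<integral>\<omega>. f n \<omega> \<partial>M)" "0 \<le> (\<integral>\<omega>. g \<omega> \<partial>M)"
    unfolding c_def using f_nonneg g_nonneg by auto
  with ineq show ?thesis
    unfolding nn_integral_eq_integral[OF f_int AE_I2[OF f_nonneg]] nn_integral_eq_integral[OF g_int AE_I2[OF g_nonneg]]
      f_def[symmetric] g_def[symmetric] c_def[symmetric]
    by (simp add: ennreal_mult[symmetric] ennreal_plus[symmetric] ennreal_leI del: ennreal_plus)
qed

lemma lyapunov_step_before_passage:
  "(\<integral>\<^sup>+\<omega>. ennreal (before_passage t (Suc k) \<omega> * A (Suc k) \<omega> * V (Suc k) \<omega>) \<partial>M)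
      + (\<integral>\<^sup>+\<omega>. ennreal ((before_passage t k \<omega> - before_passage t (Suc k) \<omega>) * A k \<omega> * V k \<omega>) \<partial>M)
    \<le> (\<integral>\<^sup>+\<omega>. ennreal (before_passage t k \<omega> * A k \<omega> * V k \<omega>) \<partial>M) + ennreal ((\<kappa> * D)\<^sup>2) *
      (\<integral>\<^sup>+\<omega>. ennreal (before_passage t (Suc k) \<omega> * ((\<gamma> (Suc k) \<omega>)\<^sup>2 * A (Suc k) \<omega>)) \<partial>M)"
proof -
  define b where "b = before_passage t"
  have b_mono: "b (Suc k) \<omega> \<le> b k \<omega>" and b_01: "0 \<le> b k \<omega>" "b k \<omega> \<le> 1" for k \<omega>
    unfolding b_def before_passage_def by auto
  have "ennreal (b k \<omega> * A k \<omega> * V k \<omega>)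
      = ennreal (b (Suc k) \<omega> * A k \<omega> * V k \<omega>) + ennreal ((b k \<omega> - b (Suc k) \<omega>) * A k \<omega> * V k \<omega>)" for \<omega>
  proof -
    have "0 \<le> b (Suc k) \<omega> * A k \<omega> * V k \<omega>" "0 \<le> (b k \<omega> - b (Suc k) \<omega>) * A k \<omega> * V k \<omega>"
      using b_mono[of k \<omega>] b_01[of "Suc k" \<omega>] A_pos[of k \<omega>] V_nonneg[of k \<omega>] by simp_all
    then show ?thesis
      by (simp add: ennreal_plus[symmetric] algebra_simps del: ennreal_plus)
  qed
  then have split: "(\<integral>\<^sup>+\<omega>. ennreal (b k \<omega> * A k \<omega> * V k \<omega>) \<partial>M)
      = (\<integral>\<^sup>+\<omega>. ennreal (b (Suc k) \<omega> * A k \<omega> * V k \<omega>) \<partial>M)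
        + (\<integral>\<^sup>+\<omega>. ennreal ((b k \<omega> - b (Suc k) \<omega>) * A k \<omega> * V k \<omega>) \<partial>M)"
    unfolding b_def by (simp add: nn_integral_add)
  have "(\<integral>\<^sup>+\<omega>. ennreal (b (Suc k) \<omega> * A (Suc k) \<omega> * V (Suc k) \<omega>) \<partial>M)
      \<le> (\<integral>\<^sup>+\<omega>. ennreal (b (Suc k) \<omega> * A k \<omega> * V k \<omega>) \<partial>M) + ennreal ((\<kappa> * D)\<^sup>2) *
        (\<integral>\<^sup>+\<omega>. ennreal (b (Suc k) \<omega> * ((\<gamma> (Suc k) \<omega>)\<^sup>2 * A (Suc k) \<omega>)) \<partial>M)"
    unfolding b_def by (rule lyapunov_step[OF before_passage_measurable_F[OF le_refl]])
      (simp_all add: before_passage_def)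
  then show ?thesis
    unfolding b_def[symmetric] split by (simp add: add_right_mono ac_simps)
qed

lemma stopped_lyapunov_bound:
  "(\<integral>\<^sup>+\<omega>. (\<Sum>k. ennreal ((before_passage t k \<omega> - before_passage t (Suc k) \<omega>) * A k \<omega> * V k \<omega>)) \<partial>M)
    \<le> (\<integral>\<^sup>+\<omega>. ennreal (V 0 \<omega>) \<partial>M) + ennreal ((\<kappa> * D)\<^sup>2) *
      (\<integral>\<^sup>+\<omega>. (\<Sum>k. ennreal (before_passage t (Suc k) \<omega> * ((\<gamma> (Suc k) \<omega>)\<^sup>2 * A (Suc k) \<omega>))) \<partial>M)"
proof -
  define P where "P k = (\<integral>\<^sup>+\<omega>. ennreal (before_passage t k \<omega> * A k \<omega> * V k \<omega>) \<partial>M)" for k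
  define E where
    "E k = (\<integral>\<^sup>+\<omega>. ennreal ((before_passage t k \<omega> - before_passage t (Suc k) \<omega>) * A k \<omega> * V k \<omega>) \<partial>M)"
    for k
  define T where
    "T k = (\<integral>\<^sup>+\<omega>. ennreal (before_passage t (Suc k) \<omega> * ((\<gamma> (Suc k) \<omega>)\<^sup>2 * A (Suc k) \<omega>)) \<partial>M)" for k
  have "(\<Sum>k. E k) \<le> P 0 + ennreal ((\<kappa> * D)\<^sup>2) * (\<Sum>k. T k)"
    by (rule suminf_le_telescoping) (unfold P_def E_def T_def, rule lyapunov_step_before_passage)
  moreover have "P 0 = (\<integral>\<^sup>+\<omega>. ennreal (V 0 \<omega>) \<partial>M)"
    unfolding P_def before_passage_def A_def S_def by simp
  ultimately show ?thesis
    unfolding E_def T_def by (simp add: nn_integral_suminf)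
qed

lemma passage_characterization:
  assumes "admissible \<omega>"
  shows "t \<le> S (passage t \<omega>) \<omega>" and "\<And>j. j < passage t \<omega> \<Longrightarrow> S j \<omega> < t"
proof -
  obtain n where "t \<le> S n \<omega>"
    using assms unfolding admissible_def by blast
  then show "t \<le> S (passage t \<omega>) \<omega>"
    unfolding passage_def by (rule LeastI)
  show "S j \<omega> < t" if "j < passage t \<omega>" for j
    using not_less_Least[of j "\<lambda>n. t \<le> S n \<omega>"] that unfolding passage_def by simp
qed

lemma before_passage_eq:
  assumes "admissible \<omega>"
  shows "before_passage t k \<omega> = of_bool (k \<le> passage t \<omega>)"
  using passage_characterization[OF assms, where t = t]
  unfolding before_passage_def by (auto simp: not_le intro: leI)

lemma suminf_before_passage_increments:
  assumes "admissible \<omega>"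
  shows "(\<Sum>k. ennreal ((before_passage t k \<omega> - before_passage t (Suc k) \<omega>) * A k \<omega> * V k \<omega>))
    = ennreal (A (passage t \<omega>) \<omega> * V (passage t \<omega>) \<omega>)"
proof -
  have "(\<Sum>k. ennreal ((before_passage t k \<omega> - before_passage t (Suc k) \<omega>) * A k \<omega> * V k \<omega>))
      = (\<Sum>k. if k = passage t \<omega> then ennreal (A k \<omega> * V k \<omega>) else 0)"
    by (intro suminf_cong) (auto simp: before_passage_eq[OF assms])
  also have "\<dots> = ennreal (A (passage t \<omega>) \<omega> * V (passage t \<omega>) \<omega>)"
    by (rule sums_unique[symmetric]) (rule sums_single)
  finally show ?thesis .
qed

definition noise_sum :: "real \<Rightarrow> 'w \<Rightarrow> real" where
  "noise_sum t \<omega> = (\<Sum>k<passage t \<omega>. (\<gamma> (Suc k) \<omega>)\<^sup>2 * A (Suc k) \<omega>)"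

lemma noise_sum_measurable [measurable]: "noise_sum t \<in> borel_measurable M"
  unfolding noise_sum_def
  by (rule measurable_compose_countable'[where I=UNIV, OF _ passage_measurable]) auto

lemma noise_sum_nonneg: "0 \<le> noise_sum t \<omega>"
  unfolding noise_sum_def by (intro sum_nonneg mult_nonneg_nonneg zero_le_power2 less_imp_le[OF A_pos])

lemma suminf_before_passage_noise:
  assumes "admissible \<omega>"
  shows "(\<Sum>k. ennreal (before_passage t (Suc k) \<omega> * ((\<gamma> (Suc k) \<omega>)\<^sup>2 * A (Suc k) \<omega>)))
    = ennreal (noise_sum t \<omega>)"
proof -
  have "(\<Sum>k. ennreal (before_passage t (Suc k) \<omega> * ((\<gamma> (Suc k) \<omega>)\<^sup>2 * A (Suc k) \<omega>)))
      = (\<Sum>k<passage t \<omega>. ennreal ((\<gamma> (Suc k) \<omega>)\<^sup>2 * A (Suc k) \<omega>))"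
    by (subst suminf_finite[of "{..<passage t \<omega>}"]) (auto simp: before_passage_eq[OF assms])
  also have "\<dots> = ennreal (noise_sum t \<omega>)"
    unfolding noise_sum_def by (intro sum_ennreal mult_nonneg_nonneg zero_le_power2 less_imp_le[OF A_pos])
  finally show ?thesis .
qed

lemma V_passage_le:
  assumes "admissible \<omega>"
  shows "V (passage t \<omega>) \<omega> \<le> exp (- \<kappa> * t) * (A (passage t \<omega>) \<omega> * V (passage t \<omega>) \<omega>)"
proof -
  have "exp (\<kappa> * t) \<le> A (passage t \<omega>) \<omega>"
    unfolding A_def using passage_characterization(1)[OF assms, of t] kappa_pos by simp
  then have "1 \<le> exp (- \<kappa> * t) * A (passage t \<omega>) \<omega>"
    by (simp add: exp_minus field_simps)
  from mult_right_mono[OF this V_nonneg[of "passage t \<omega>" \<omega>]] show ?thesis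
    by (simp add: mult.assoc)
qed

lemma nn_integral_V_passage_le:
  "(\<integral>\<^sup>+\<omega>. ennreal (V (passage t \<omega>) \<omega>) \<partial>M) \<le> ennreal (exp (- \<kappa> * t)) *
    ((\<integral>\<^sup>+\<omega>. ennreal (V 0 \<omega>) \<partial>M) + ennreal ((\<kappa> * D)\<^sup>2) * (\<integral>\<^sup>+\<omega>. ennreal (noise_sum t \<omega>) \<partial>M))"
proof -
  have "AE \<omega> in M. ennreal (V (passage t \<omega>) \<omega>) \<le> ennreal (exp (- \<kappa> * t)) *
      (\<Sum>k. ennreal ((before_passage t k \<omega> - before_passage t (Suc k) \<omega>) * A k \<omega> * V k \<omega>))"
    using AE_admissible
  proof eventually_elim
    case (elim \<omega>)
    then show ?case
      unfolding suminf_before_passage_increments[OF elim]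
      using V_passage_le[OF elim, of t] A_pos[of "passage t \<omega>" \<omega>] V_nonneg[of "passage t \<omega>" \<omega>]
      by (simp add: ennreal_mult[symmetric] ennreal_leI)
  qed
  then have "(\<integral>\<^sup>+\<omega>. ennreal (V (passage t \<omega>) \<omega>) \<partial>M) \<le> ennreal (exp (- \<kappa> * t)) *
      (\<integral>\<^sup>+\<omega>. (\<Sum>k. ennreal ((before_passage t k \<omega> - before_passage t (Suc k) \<omega>) * A k \<omega> * V k \<omega>)) \<partial>M)"
    by (subst nn_integral_cmult[symmetric]) (auto intro: nn_integral_mono_AE)
  also have "\<dots> \<le> ennreal (exp (- \<kappa> * t)) *
      ((\<integral>\<^sup>+\<omega>. ennreal (V 0 \<omega>) \<partial>M) + ennreal ((\<kappa> * D)\<^sup>2) *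
        (\<integral>\<^sup>+\<omega>. (\<Sum>k. ennreal (before_passage t (Suc k) \<omega> * ((\<gamma> (Suc k) \<omega>)\<^sup>2 * A (Suc k) \<omega>))) \<partial>M))"
    by (intro mult_left_mono stopped_lyapunov_bound) simp
  also have "(\<integral>\<^sup>+\<omega>. (\<Sum>k. ennreal (before_passage t (Suc k) \<omega> * ((\<gamma> (Suc k) \<omega>)\<^sup>2 * A (Suc k) \<omega>))) \<partial>M)
      = (\<integral>\<^sup>+\<omega>. ennreal (noise_sum t \<omega>) \<partial>M)"
    using AE_admissible by (intro nn_integral_cong_AE) (auto elim: eventually_mono simp: suminf_before_passage_noise)
  finally show ?thesis .
qed

lemma S_passage_le:
  assumes "admissible \<omega>" "0 \<le> t"
  shows "\<kappa> * S (passage t \<omega>) \<omega> \<le> \<kappa> * t + 1"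
proof (cases "passage t \<omega>")
  case 0
  then show ?thesis
    using assms kappa_pos by (simp add: S_def)
next
  case (Suc p)
  then have "\<kappa> * S p \<omega> \<le> \<kappa> * t"
    using passage_characterization(2)[OF assms(1), of p t] kappa_pos by simp
  moreover have "\<kappa> * \<gamma> (Suc p) \<omega> \<le> 1"
    using assms(1) unfolding admissible_def by blast
  ultimately show ?thesis
    unfolding Suc S_Suc by (simp add: distrib_left)
qed

lemma noise_sum_eq:
  "noise_sum t \<omega> = (\<Sum>k<passage t \<omega>. (\<gamma> (Suc k) \<omega>)\<^sup>2 * exp (\<kappa> * (\<Sum>j<Suc k. \<gamma> (Suc j) \<omega>)))"
  unfolding noise_sum_def A_def S_def ..

lemma exp_neg_noise_sum_le:
  assumes adm: "admissible \<omega>" and t: "0 \<le> t"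
  shows "exp (- \<kappa> * t) * noise_sum t \<omega> \<le> (exp 1 / \<kappa>)\<^sup>2"
proof -
  have g: "0 \<le> \<gamma> (Suc k) \<omega>" "\<kappa> * \<gamma> (Suc k) \<omega> \<le> 1" for k
    using adm unfolding admissible_def by auto
  then have "\<gamma> (Suc k) \<omega> \<le> 1 / \<kappa>" for k
    using kappa_pos by (simp add: field_simps)
  then have "exp (- \<kappa> * t) * noise_sum t \<omega> \<le> 0 * exp (- \<kappa> * t) + 1 / \<kappa> * (exp 1)\<^sup>2 / \<kappa>"
    unfolding noise_sum_eq
    using exp_neg_sum_sq_exp_partial_sums_le[where g = "\<lambda>k. \<gamma> (Suc k) \<omega>" and K = 0 and \<delta> = "1 / \<kappa>"]
      S_passage_le[OF adm t] kappa_pos g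
    by (simp add: S_def)
  then show ?thesis
    by (simp add: power2_eq_square)
qed

lemma tendsto_integral_exp_neg_noise_sum:
  "((\<lambda>t. \<integral>\<omega>. exp (- \<kappa> * t) * noise_sum t \<omega> \<partial>M) \<longlongrightarrow> 0) at_top"
proof -
  have "((\<lambda>t. \<integral>\<omega>. exp (- \<kappa> * t) * noise_sum t \<omega> \<partial>M) \<longlongrightarrow> (\<integral>\<omega>. 0 \<partial>M)) at_top"
  proof (rule integral_dominated_convergence_at_top[where w="\<lambda>_. (exp 1 / \<kappa>)\<^sup>2"])
    show "AE \<omega> in M. ((\<lambda>t. exp (- \<kappa> * t) * noise_sum t \<omega>) \<longlongrightarrow> 0) at_top"
      using AE_admissible
    proof eventually_elim
      case (elim \<omega>)
      then have "\<forall>k. 0 \<le> \<gamma> (Suc k) \<omega> \<and> \<kappa> * \<gamma> (Suc k) \<omega> \<le> 1" "(\<lambda>k. \<gamma> (Suc k) \<omega>) \<longlonglongrightarrow> 0"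
        unfolding admissible_def by auto
      with S_passage_le[OF elim] show ?case
        unfolding noise_sum_eq
        by (intro tendsto_exp_neg_sum_sq_exp_partial_sums[OF kappa_pos]) (auto simp: S_def)
    qed
    show "\<forall>\<^sub>F t in at_top. AE \<omega> in M. norm (exp (- \<kappa> * t) * noise_sum t \<omega>) \<le> (exp 1 / \<kappa>)\<^sup>2"
      using eventually_ge_at_top[of "0::real"]
    proof eventually_elim
      case (elim t)
      show ?case
        using AE_admissible by eventually_elim (use elim exp_neg_noise_sum_le noise_sum_nonneg in auto)
    qed
  qed auto
  then show ?thesis
    by simp
qed

lemma nn_integral_V_passage_le_integral:
  assumes t: "0 \<le> t"
  shows "(\<integral>\<^sup>+\<omega>. ennreal (V (passage t \<omega>) \<omega>) \<partial>M)
    \<le> ennreal (exp (- \<kappa> * t) * (\<integral>\<omega>. V 0 \<omega> \<partial>M)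
      + (\<kappa> * D)\<^sup>2 * (\<integral>\<omega>. exp (- \<kappa> * t) * noise_sum t \<omega> \<partial>M))"
proof -
  have int: "integrable M (\<lambda>\<omega>. exp (- \<kappa> * t) * noise_sum t \<omega>)"
    by (rule integrable_const_bound[where B="(exp 1 / \<kappa>)\<^sup>2"])
      (use AE_admissible exp_neg_noise_sum_le[OF _ t] noise_sum_nonneg in \<open>auto elim: eventually_mono\<close>)
  have "ennreal (exp (- \<kappa> * t)) * (\<integral>\<^sup>+\<omega>. ennreal (noise_sum t \<omega>) \<partial>M)
      = (\<integral>\<^sup>+\<omega>. ennreal (exp (- \<kappa> * t) * noise_sum t \<omega>) \<partial>M)"
    by (subst nn_integral_cmult[symmetric]) (auto simp: ennreal_mult noise_sum_nonneg)
  also have "\<dots> = ennreal (\<integral>\<omega>. exp (- \<kappa> * t) * noise_sum t \<omega> \<partial>M)"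
    using int by (intro nn_integral_eq_integral) (auto simp: noise_sum_nonneg)
  finally have noise: "ennreal (exp (- \<kappa> * t)) * (\<integral>\<^sup>+\<omega>. ennreal (noise_sum t \<omega>) \<partial>M)
      = ennreal (\<integral>\<omega>. exp (- \<kappa> * t) * noise_sum t \<omega> \<partial>M)" .
  have V0: "(\<integral>\<^sup>+\<omega>. ennreal (V 0 \<omega>) \<partial>M) = ennreal (\<integral>\<omega>. V 0 \<omega> \<partial>M)"
    using integrable_V by (intro nn_integral_eq_integral) (auto simp: V_nonneg)
  have nonneg: "0 \<le> (\<integral>\<omega>. V 0 \<omega> \<partial>M)" "0 \<le> (\<integral>\<omega>. exp (- \<kappa> * t) * noise_sum t \<omega> \<partial>M)"
    by (auto simp: V_nonneg noise_sum_nonneg)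
  from nn_integral_V_passage_le[of t] show ?thesis
    unfolding V0 distrib_left mult.left_commute[of "ennreal (exp (- \<kappa> * t))"] noise
    using nonneg by (simp add: ennreal_mult ennreal_plus del: ennreal_plus[symmetric])
qed

theorem tendsto_nn_integral_V_passage:
  "((\<lambda>t. \<integral>\<^sup>+\<omega>. ennreal (V (passage t \<omega>) \<omega>) \<partial>M) \<longlongrightarrow> 0) at_top"
proof -
  define h where "h t = exp (- \<kappa> * t) * (\<integral>\<omega>. V 0 \<omega> \<partial>M)
    + (\<kappa> * D)\<^sup>2 * (\<integral>\<omega>. exp (- \<kappa> * t) * noise_sum t \<omega> \<partial>M)" for t
  have "(h \<longlongrightarrow> 0 * (\<integral>\<omega>. V 0 \<omega> \<partial>M) + (\<kappa> * D)\<^sup>2 * 0) at_top"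
    unfolding h_def using tendsto_exp_neg_mult_at_top[OF kappa_pos, of 1]
    by (intro tendsto_intros tendsto_integral_exp_neg_noise_sum) simp
  then have h: "((\<lambda>t. ennreal (h t)) \<longlongrightarrow> 0) at_top"
    using tendsto_ennrealI[of h 0] by simp
  have "\<forall>\<^sub>F t in at_top. (\<integral>\<^sup>+\<omega>. ennreal (V (passage t \<omega>) \<omega>) \<partial>M) \<le> ennreal (h t)"
    unfolding h_def by (rule eventually_mono[OF eventually_ge_at_top nn_integral_V_passage_le_integral])
  then show ?thesis
    by (intro tendsto_sandwich[OF _ _ tendsto_const h]) auto
qed

end

theorem corollary4p15:
  fixes \<kappa> :: real
    and l :: "real^'d \<Rightarrow> real^'d \<Rightarrow> real"
    and M :: "'w measure"
    and F :: "nat \<Rightarrow> 'w measure"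
    and \<gamma> :: "nat \<Rightarrow> 'w \<Rightarrow> real"
    and Mb :: nat
    and X :: "nat \<Rightarrow> nat \<Rightarrow> 'w \<Rightarrow> real^'d"
    and \<Theta> :: "nat \<Rightarrow> 'w \<Rightarrow> real^'d"
    and N :: "real \<Rightarrow> 'w \<Rightarrow> nat"
  assumes kappa_pos: "0 < \<kappa>"
    and l_def: "\<And>\<theta> x. l \<theta> x = \<kappa> / 2 * (norm (\<theta> - x))^2"
    and prob: "prob_space M"
    and filt: "filtration (space M) F"
    and sub: "\<And>n. subalgebra M (F n)"
    and gamma_meas: "\<And>n. n \<ge> 1 \<Longrightarrow> \<gamma> n \<in> borel_measurable (F (n - 1))"
    and gamma_limsup: "AE \<omega> in M. limsup (\<lambda>n. ereal (\<gamma> n \<omega>)) = 0"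
    and gamma_sum: "AE \<omega> in M. (\<Sum>n. ennreal \<bar>\<gamma> (Suc n) \<omega>\<bar>) = \<infinity>"
    and gamma_mono: "\<And>n. n \<ge> 1 \<Longrightarrow>
        (AE \<omega> in M. \<gamma> (Suc n) \<omega> \<le> \<gamma> n \<omega> \<and> \<gamma> n \<omega> \<le> 1 / \<kappa>)"
    and Mb_pos: "Mb \<ge> 1"
    and X_rv: "\<And>n m. n \<ge> 1 \<Longrightarrow> m \<in> {1..Mb} \<Longrightarrow> X n m \<in> borel_measurable M"
    and X_indep: "prob_space.indep_vars M (\<lambda>_. borel) (\<lambda>(n, m). X n m)
        {(n, m). n \<ge> 1 \<and> m \<in> {1..Mb}}"
    and X_ident: "\<And>n m. n \<ge> 1 \<Longrightarrow> m \<in> {1..Mb} \<Longrightarrow>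
        distr M borel (X n m) = distr M borel (X 1 1)"
    and Theta_adapted: "\<And>n. \<Theta> n \<in> borel_measurable (F n)"
    and Theta_rec: "\<And>n \<omega>. n \<ge> 1 \<Longrightarrow> \<omega> \<in> space M \<Longrightarrow>
        \<Theta> n \<omega> = \<Theta> (n - 1) \<omega> -
          (\<gamma> n \<omega> / real Mb) *\<^sub>R (\<Sum>m = 1..Mb. grad1 l (\<Theta> (n - 1) \<omega>) (X n m \<omega>))"
    and X_adapted: "\<And>n m. n \<ge> 1 \<Longrightarrow> m \<in> {1..Mb} \<Longrightarrow> X n m \<in> borel_measurable (F n)"
    and X_indep_past: "\<And>n. n \<ge> 1 \<Longrightarrow> prob_space.indep_set M
        (sigma_sets (space M) (\<Union>m\<in>{1..Mb}. {X n m -` A \<inter> space M | A. A \<in> sets borel}))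
        (sets (F (n - 1)))"
    and moment: "(\<integral>\<^sup>+ \<omega>. ennreal ((norm (\<Theta> 0 \<omega>))^2)
        + (SUP n\<in>{1..}. ennreal (norm (X n 1 \<omega>))) \<partial>M) < \<infinity>"
    and N_def: "\<And>t \<omega>. t \<ge> 0 \<Longrightarrow> N t \<omega> = Inf {n. (\<Sum>k = 1..n. \<gamma> k \<omega>) \<ge> t}"
  shows "Limsup at_top (\<lambda>t. \<integral>\<^sup>+ \<omega>. ennreal ((norm (\<Theta> (N t \<omega>) \<omega> - integral\<^sup>L M (X 1 1)))^2) \<partial>M) = 0"
proof -
  interpret prob_space M
    by (rule prob)
  define \<mu> where "\<mu> = integral\<^sup>L M (X 1 1)"
  define \<xi> where "\<xi> n \<omega> = (1 / real Mb) *\<^sub>R (\<Sum>m=1..Mb. X n m \<omega>) - \<mu>" for n \<omega>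
  have moment_\<Theta>: "(\<integral>\<^sup>+\<omega>. ennreal ((norm (\<Theta> 0 \<omega>))\<^sup>2) \<partial>M) < \<infinity>"
    and moment_X: "(\<integral>\<^sup>+\<omega>. (SUP n\<in>{1..}. ennreal (norm (X n 1 \<omega>))) \<partial>M) < \<infinity>"
    by (rule le_less_trans[OF nn_integral_mono moment]; simp)+
  from moment_X obtain B where B: "AE \<omega> in M. \<forall>n m. n \<ge> 1 \<longrightarrow> m \<in> {1..Mb} \<longrightarrow> norm (X n m \<omega>) \<le> B"
    using AE_iid_family_bounded[OF Mb_pos X_indep X_ident] by blast
  have X_int: "integrable M (X n m)" and X_mean: "integral\<^sup>L M (X n m) = \<mu>"
    if "n \<ge> 1" "m \<in> {1..Mb}" for n m
  proof -
    show "integrable M (X n m)"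
      using B X_rv[OF that] that by (intro integrable_const_bound[where B=B]) (auto elim: eventually_mono)
    show "integral\<^sup>L M (X n m) = \<mu>"
      unfolding \<mu>_def using Mb_pos
      by (intro integral_eq_if_distr_eq[OF X_rv[OF that] X_rv X_ident[OF that]]) auto
  qed
  note steps = AE_step_size_path[OF kappa_pos gamma_limsup gamma_sum gamma_mono]
  interpret sgd_error_recursion M F \<kappa> "B + norm \<mu>" \<gamma> "\<lambda>n \<omega>. \<Theta> n \<omega> - \<mu>" \<xi>
  proof unfold_locales
    show "\<gamma> (Suc n) \<in> borel_measurable (F n)" for n
      using gamma_meas[of "Suc n"] by simp
    show "(\<lambda>\<omega>. \<Theta> n \<omega> - \<mu>) \<in> borel_measurable (F n)" for n
      using Theta_adapted[of n] by measurable
    show "\<xi> (Suc n) \<in> borel_measurable M" for n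
      unfolding \<xi>_def using X_rv by measurable
    show "\<Theta> (Suc n) \<omega> - \<mu> = (1 - \<kappa> * \<gamma> (Suc n) \<omega>) *\<^sub>R (\<Theta> n \<omega> - \<mu>) + (\<kappa> * \<gamma> (Suc n) \<omega>) *\<^sub>R \<xi> (Suc n) \<omega>"
      if "\<omega> \<in> space M" for n \<omega>
      using Theta_rec[of "Suc n" \<omega>] that minibatch_step_scaled_sq_dist[of Mb] Mb_pos
      unfolding \<xi>_def grad1_scaled_sq_dist[OF l_def] by simp
    show "(\<integral>\<omega>. U \<omega> \<bullet> \<xi> (Suc n) \<omega> \<partial>M) = 0"
      if "U \<in> borel_measurable (F n)" "integrable M U" for n U
      unfolding \<xi>_def
      by (rule minibatch_noise_centered[OF Mb_pos sub[of n]])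
        (use X_indep_past[of "Suc n"] X_rv X_int X_mean that in auto)
    show "AE \<omega> in M. \<forall>n. norm (\<xi> (Suc n) \<omega>) \<le> B + norm \<mu>"
      using B unfolding \<xi>_def by eventually_elim (intro allI norm_batch_mean_diff_le[OF Mb_pos], simp)
    show "integrable M (\<lambda>\<omega>. (norm (\<Theta> 0 \<omega> - \<mu>))\<^sup>2)"
      using measurable_from_subalg[OF sub Theta_adapted[of 0]] moment_\<Theta> by (rule integrable_norm_diff_sq)
  qed (use kappa_pos sub steps filtration.space_F[OF filt] filtration.sets_F_mono[OF filt] in
      \<open>auto elim: eventually_mono\<close>)
  have "Limsup at_top (\<lambda>t. \<integral>\<^sup>+ \<omega>. ennreal ((norm (\<Theta> (N t \<omega>) \<omega> - integral\<^sup>L M (X 1 1)))^2) \<partial>M)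
      = Limsup at_top (\<lambda>t. \<integral>\<^sup>+\<omega>. ennreal (V (passage t \<omega>) \<omega>) \<partial>M)"
    unfolding \<mu>_def[symmetric] using eventually_ge_at_top[of "0::real"]
    by (intro Limsup_eq, elim eventually_mono)
      (simp add: N_def V_def passage_def S_def Inf_nat_def sum.atLeast1_atMost_eq)
  also have "\<dots> = 0"
    using lim_imp_Limsup[OF _ tendsto_nn_integral_V_passage] by simp
  finally show ?thesis .
qed

end
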